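(* Let $(X,d)$ and $(\Lambda,d_\Lambda)$ be compact metric spaces, let $\tau:\Lambda\times X\to X$ be continuous, and let $q:X\to\mathcal{P}(\Lambda)$, $x\mapsto q_x$, be continuous. Assume: (W1) for every $\lambda\in\Lambda$ the map $\tau_\lambda$ is $1$-Lipschitz on $X$; (CP1) there are an integer $M\ge 1$ and $0<s<1$ such that for every $\lambda^M\in\Lambda^M$ the map $\tau_{\lambda^M}$ is $s$-Lipschitz on $X$; (H2) there is $r\ge 0$ with $d(\tau(\lambda_1,x),\tau(\lambda_2,x))\le r\,d_\Lambda(\lambda_1,\lambda_2)$ for all $\lambda_1,\lambda_2\in\Lambda$, $x\in X$; (H3) there is $t\ge 0$ with $d_{MK}(q_x,q_y)\le t\,d(x,y)$ for all $x,y\in X$; (H4) $q_x(A)>0$ for every nonempty open set $A\subseteq\Lambda$ and every $x\in X$. Suppose $s+r\,M\,t<1$. Then: (1) there is a unique nonempty compact set $A_{\mathcal R}\subseteq X$ with $F_{\mathcal R}(A_{\mathcal R})=A_{\mathcal R}$, and for every nonempty compact $B\subseteq X$, $F_{\mathcal R}^k(B)\to A_{\mathcal R}$ in the Hausdorff distance; (2) there is a unique $\mu_{\mathcal R}\in\mathcal{P}(X)$ with $T_q(\mu_{\mathcal R})=\mu_{\mathcal R}$, and for every $\nu\in\mathcal{P}(X)$, $T_q^k(\nu)\to\mu_{\mathcal R}$ in the Monge–Kantorovich distance; (3) $\operatorname{supp}(\mu_{\mathcal R})=A_{\mathcal R}$.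
   Context: $\mathcal{P}(Y)$ denotes the set of Borel probability measures on a compact metric space $Y$, with the Monge–Kantorovich distance $d_{MK}(\mu,\nu)=\sup_{f\in \mathrm{Lip}_1(Y)}\{\int f\,d\mu-\int f\,d\nu\}$, where $\mathrm{Lip}_1(Y)$ is the set of real $1$-Lipschitz functions on $Y$. Write $\tau_\lambda(x)=\tau(\lambda,x)$, and for $\lambda^k=(\lambda_0,\dots,\lambda_{k-1})\in\Lambda^k$, $\tau_{\lambda^k}=\tau_{\lambda_{k-1}}\circ\cdots\circ\tau_{\lambda_0}$. The Hutchinson–Barnsley (fractal) operator on the nonempty compact subsets of $X$ is $F_{\mathcal R}(B)=\bigcup_{\lambda\in\Lambda}\tau_\lambda(B)$. The transfer operator is $B_q(f)(x)=\int_\Lambda f(\tau(\lambda,x))\,dq_x(\lambda)$ for $f\in C(X)$, and the Markov operator $T_q:\mathcal{P}(X)\to\mathcal{P}(X)$ is defined by $\int f\,dT_q(\mu)=\int B_q(f)\,d\mu$ for all $f\in C(X)$. $T_q^k$, $F_{\mathcal R}^k$ are $k$-th iterates. *)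

theory Defs
  imports "HOL-Analysis.Analysis" "HOL-Probability.Probability"
begin

definition Prob :: "'a::metric_space measure set" where
  "Prob = {\<mu>. prob_space \<mu> \<and> sets \<mu> = sets borel}"

definition dMK :: "'a::metric_space measure \<Rightarrow> 'a measure \<Rightarrow> real" where
  "dMK \<mu> \<nu> = (SUP f \<in> {f :: 'a \<Rightarrow> real. 1-lipschitz_on UNIV f}.
                   integral\<^sup>L \<mu> f - integral\<^sup>L \<nu> f)"

text \<open>Hausdorff distance between nonempty bounded sets.\<close>
definition hausdorff_dist :: "'a::metric_space set \<Rightarrow> 'a set \<Rightarrow> real" where
  "hausdorff_dist A B = max (SUP a \<in> A. infdist a B) (SUP b \<in> B. infdist b A)"

text \<open>Composition along a word: tau_seq tau [l0,...,l(k-1)] = tau l(k-1) o ... o tau l0.\<close>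
primrec tau_seq :: "('l \<Rightarrow> 'x \<Rightarrow> 'x) \<Rightarrow> 'l list \<Rightarrow> 'x \<Rightarrow> 'x" where
  "tau_seq \<tau> [] = id"
| "tau_seq \<tau> (l # ls) = tau_seq \<tau> ls \<circ> \<tau> l"

definition fractal_op :: "('l \<Rightarrow> 'x \<Rightarrow> 'x) \<Rightarrow> 'x set \<Rightarrow> 'x set" where
  "fractal_op \<tau> B = (\<Union>l. \<tau> l ` B)"

definition transfer_op :: "('x \<Rightarrow> 'l measure) \<Rightarrow> ('l \<Rightarrow> 'x \<Rightarrow> 'x) \<Rightarrow> ('x \<Rightarrow> real) \<Rightarrow> 'x \<Rightarrow> real" where
  "transfer_op q \<tau> f x = integral\<^sup>L (q x) (\<lambda>l. f (\<tau> l x))"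

definition markov_op :: "('x::metric_space \<Rightarrow> 'l measure) \<Rightarrow> ('l \<Rightarrow> 'x \<Rightarrow> 'x) \<Rightarrow> 'x measure \<Rightarrow> 'x measure" where
  "markov_op q \<tau> \<mu> = (THE \<nu>. \<nu> \<in> Prob \<and>
      (\<forall>f :: 'x \<Rightarrow> real. continuous_on UNIV f \<longrightarrow>
          integral\<^sup>L \<nu> f = integral\<^sup>L \<mu> (transfer_op q \<tau> f)))"

definition supp :: "'a::topological_space measure \<Rightarrow> 'a set" where
  "supp \<mu> = {x. \<forall>U. open U \<and> x \<in> U \<longrightarrow> emeasure \<mu> U > 0}"

end

theory Submission
  imports Defs
begin

text \<open>Words of length \<open>n\<close> act by \<open>s^(n div M)\<close>-Lipschitz maps, so \<open>F^n\<close> contracts the Hausdorff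
  distance by factors tending to 0, and the attractor is the intersection of the decreasing
  compact sets \<open>F^k(X)\<close>. For the Markov operator, the Lipschitz constants \<open>b n\<close> of the iterates
  \<open>B^n f\<close> of a 1-Lipschitz \<open>f\<close> obey the renewal inequality
  \<open>b n \<le> a n + r t (\<Sum>i<n. a i * b (n - 1 - i))\<close> with \<open>a n = s^(n div M)\<close>. Since
  \<open>(\<Sum>n. a n) \<le> M / (1 - s)\<close> and \<open>r t M / (1 - s) < 1\<close>, the \<open>b n\<close> are summable, so \<open>T^n\<close> shrinks
  Monge--Kantorovich distances by factors \<open>b n \<longlonglongrightarrow> 0\<close>. Integrals of Lipschitz functions along an
  orbit therefore converge, a limit measure exists, and it is the unique invariant measure,
  attracting all orbits. Its support is closed, nonempty and, by (H4), mapped into itself by \<open>F\<close>,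
  so it contains the attractor; conversely the orbit of a Dirac measure at a point of the
  attractor stays on the attractor, and so does its limit.\<close>

section \<open>Lipschitz real functions\<close>

definition lipschitz :: "('a::metric_space \<Rightarrow> real) \<Rightarrow> bool" where
  "lipschitz f \<longleftrightarrow> (\<exists>L. L-lipschitz_on UNIV f)"

lemma lipschitzI: "L-lipschitz_on UNIV f \<Longrightarrow> lipschitz f"
  unfolding lipschitz_def by blast

lemma lipschitzE:
  assumes "lipschitz f"
  obtains L where "L \<ge> 0" "L-lipschitz_on UNIV f"
  using assms lipschitz_on_nonneg unfolding lipschitz_def by blast

lemma lipschitz_imp_continuous: "lipschitz f \<Longrightarrow> continuous_on UNIV f"
  unfolding lipschitz_def using lipschitz_on_continuous_on by blast

lemma lipschitz_imp_measurable: "lipschitz f \<Longrightarrow> f \<in> borel_measurable borel"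
  by (rule borel_measurable_continuous_onI[OF lipschitz_imp_continuous])

lemma lipschitz_const: "lipschitz (\<lambda>x. c)"
  using lipschitz_on_constant lipschitzI by blast

lemma lipschitz_add: "lipschitz f \<Longrightarrow> lipschitz g \<Longrightarrow> lipschitz (\<lambda>x. f x + g x)"
  unfolding lipschitz_def using lipschitz_on_add by blast

lemma lipschitz_diff: "lipschitz f \<Longrightarrow> lipschitz g \<Longrightarrow> lipschitz (\<lambda>x. f x - g x)"
  unfolding lipschitz_def using lipschitz_on_diff by blast

lemma lipschitz_cmult: "lipschitz f \<Longrightarrow> lipschitz (\<lambda>x. c * f x)"
  unfolding lipschitz_def using lipschitz_on_cmult_real by blast

lemma lipschitz_sum:
  "finite I \<Longrightarrow> (\<And>i. i \<in> I \<Longrightarrow> lipschitz (f i)) \<Longrightarrow> lipschitz (\<lambda>x. \<Sum>i\<in>I. f i x)"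
  by (induction I rule: finite_induct) (auto intro: lipschitz_add lipschitz_const)

lemma continuous_on_compact_UNIV_bounded:
  fixes f :: "'a::metric_space \<Rightarrow> real"
  assumes "compact (UNIV::'a set)" "continuous_on UNIV f"
  obtains B where "\<And>x. \<bar>f x\<bar> \<le> B"
proof -
  have "bounded (f ` UNIV)"
    using assms compact_continuous_image compact_imp_bounded by blast
  then show ?thesis using that unfolding bounded_iff by auto
qed

lemma lipschitz_on_mult_bounded:
  fixes f g :: "'a::metric_space \<Rightarrow> real"
  assumes "L1-lipschitz_on UNIV f" "L2-lipschitz_on UNIV g"
    and "\<And>x. \<bar>f x\<bar> \<le> B1" "\<And>x. \<bar>g x\<bar> \<le> B2"
  shows "(B1 * L2 + B2 * L1)-lipschitz_on UNIV (\<lambda>x. f x * g x)"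
proof (rule lipschitz_onI)
  have L: "L1 \<ge> 0" "L2 \<ge> 0" using assms lipschitz_on_nonneg by blast+
  have B: "B1 \<ge> 0" "B2 \<ge> 0" using assms(3,4) abs_ge_zero order_trans by blast+
  then show "0 \<le> B1 * L2 + B2 * L1" using L by simp
  fix x y :: 'a
  have "f x * g x - f y * g y = f x * (g x - g y) + g y * (f x - f y)" by algebra
  moreover have "\<bar>f x * (g x - g y)\<bar> \<le> B1 * (L2 * dist x y)"
    unfolding abs_mult using lipschitz_onD[OF assms(2)] B
    by (intro mult_mono assms(3)) (auto simp: dist_real_def)
  moreover have "\<bar>g y * (f x - f y)\<bar> \<le> B2 * (L1 * dist x y)"
    unfolding abs_mult using lipschitz_onD[OF assms(1)] B
    by (intro mult_mono assms(4)) (auto simp: dist_real_def)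
  ultimately show "dist (f x * g x) (f y * g y) \<le> (B1 * L2 + B2 * L1) * dist x y"
    by (simp add: dist_real_def algebra_simps)
qed

lemma lipschitz_mult:
  fixes f g :: "'a::metric_space \<Rightarrow> real"
  assumes "compact (UNIV::'a set)" "lipschitz f" "lipschitz g"
  shows "lipschitz (\<lambda>x. f x * g x)"
proof -
  obtain L1 L2 where L: "L1-lipschitz_on UNIV f" "L2-lipschitz_on UNIV g"
    using assms(2,3) by (meson lipschitzE)
  obtain B1 B2 where "\<And>x. \<bar>f x\<bar> \<le> B1" "\<And>x. \<bar>g x\<bar> \<le> B2"
    using continuous_on_compact_UNIV_bounded[OF assms(1) lipschitz_imp_continuous]
      assms(2,3) by metis
  then show ?thesis using lipschitz_on_mult_bounded[OF L] lipschitzI by blast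
qed

lemma lipschitz_prod:
  assumes "compact (UNIV::'a::metric_space set)"
  shows "finite I \<Longrightarrow> (\<And>i. i \<in> I \<Longrightarrow> lipschitz (f i :: 'a \<Rightarrow> real)) \<Longrightarrow>
    lipschitz (\<lambda>x. \<Prod>i\<in>I. f i x)"
  by (induction I rule: finite_induct) (auto intro: lipschitz_mult[OF assms] lipschitz_const)

section \<open>Borel probability measures\<close>

lemma prob_space_Prob: "\<mu> \<in> Prob \<Longrightarrow> prob_space \<mu>"
  and sets_Prob: "\<mu> \<in> Prob \<Longrightarrow> sets \<mu> = sets borel"
  unfolding Prob_def by auto

lemma space_Prob: "\<mu> \<in> Prob \<Longrightarrow> space \<mu> = UNIV"
  using sets_eq_imp_space_eq[OF sets_Prob] by simp

lemma measurable_Prob: "\<mu> \<in> Prob \<Longrightarrow> f \<in> borel_measurable borel \<Longrightarrow> f \<in> borel_measurable \<mu>"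
  using measurable_cong_sets[OF sets_Prob refl] by blast

lemma integrable_Prob_bounded:
  fixes f :: "'a::metric_space \<Rightarrow> real"
  assumes "\<mu> \<in> Prob" "f \<in> borel_measurable borel" "\<And>x. \<bar>f x\<bar> \<le> B"
  shows "integrable \<mu> f"
proof -
  interpret prob_space \<mu> by (rule prob_space_Prob[OF assms(1)])
  show ?thesis
    by (rule integrable_const_bound[where B=B]) (use assms measurable_Prob in auto)
qed

lemma integrable_Prob_continuous:
  fixes f :: "'a::metric_space \<Rightarrow> real"
  assumes "compact (UNIV::'a set)" "\<mu> \<in> Prob" "continuous_on UNIV f"
  shows "integrable \<mu> f"
proof -
  obtain B where "\<And>x. \<bar>f x\<bar> \<le> B"
    using continuous_on_compact_UNIV_bounded[OF assms(1,3)] by blast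
  then show ?thesis
    using integrable_Prob_bounded[OF assms(2) borel_measurable_continuous_onI[OF assms(3)]] by blast
qed

lemma integrable_Prob_lipschitz:
  "compact (UNIV::'a::metric_space set) \<Longrightarrow> \<mu> \<in> Prob \<Longrightarrow> lipschitz (f::'a \<Rightarrow> real) \<Longrightarrow>
    integrable \<mu> f"
  using integrable_Prob_continuous lipschitz_imp_continuous by blast

lemma integral_const_Prob:
  assumes "\<mu> \<in> Prob"
  shows "integral\<^sup>L \<mu> (\<lambda>x. c) = (c::real)"
proof -
  interpret prob_space \<mu> by (rule prob_space_Prob[OF assms])
  show ?thesis by (simp add: prob_space)
qed

lemma integral_le_const_Prob:
  fixes f :: "'a::metric_space \<Rightarrow> real"
  shows "\<mu> \<in> Prob \<Longrightarrow> integrable \<mu> f \<Longrightarrow> (\<And>x. f x \<le> c) \<Longrightarrow> integral\<^sup>L \<mu> f \<le> c"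
  by (rule prob_space.integral_le_const[OF prob_space_Prob]) (auto intro: AE_I2)

lemma integral_ge_const_Prob:
  fixes f :: "'a::metric_space \<Rightarrow> real"
  shows "\<mu> \<in> Prob \<Longrightarrow> integrable \<mu> f \<Longrightarrow> (\<And>x. c \<le> f x) \<Longrightarrow> c \<le> integral\<^sup>L \<mu> f"
  by (rule prob_space.integral_ge_const[OF prob_space_Prob]) (auto intro: AE_I2)

lemma abs_integral_le_const_Prob:
  fixes f :: "'a::metric_space \<Rightarrow> real"
  assumes "\<mu> \<in> Prob" "integrable \<mu> f" "\<And>x. \<bar>f x\<bar> \<le> c"
  shows "\<bar>integral\<^sup>L \<mu> f\<bar> \<le> c"
proof -
  have "f x \<le> c" "- c \<le> f x" for x
    using assms(3)[of x] by auto
  then show ?thesis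
    using integral_le_const_Prob[OF assms(1,2)] integral_ge_const_Prob[OF assms(1,2)] by fastforce
qed

definition cutoff :: "'a::metric_space set \<Rightarrow> nat \<Rightarrow> 'a \<Rightarrow> real" where
  "cutoff C m x = max 0 (1 - real m * infdist x C)"

lemma lipschitz_cutoff: "lipschitz (cutoff C m)"
proof (rule lipschitzI[of "real m"], rule lipschitz_onI)
  fix x y :: 'a
  have "\<bar>cutoff C m x - cutoff C m y\<bar> \<le> \<bar>(1 - real m * infdist x C) - (1 - real m * infdist y C)\<bar>"
    unfolding cutoff_def by linarith
  also have "\<dots> = real m * \<bar>infdist x C - infdist y C\<bar>"
    by (simp add: abs_mult right_diff_distrib[symmetric] abs_minus_commute)
  also have "\<dots> \<le> real m * dist x y"
    by (rule mult_left_mono) (auto simp: infdist_triangle_abs)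
  finally show "dist (cutoff C m x) (cutoff C m y) \<le> real m * dist x y"
    by (simp add: dist_real_def)
qed simp

lemma abs_cutoff_le_1: "\<bar>cutoff C m x\<bar> \<le> 1"
  unfolding cutoff_def using infdist_nonneg[of x C] by auto

lemma indicator_le_cutoff: "indicator C x \<le> cutoff C m x"
  unfolding cutoff_def by (auto simp: indicator_def)

lemma cutoff_tendsto_indicator:
  assumes "closed C" "C \<noteq> {}"
  shows "(\<lambda>m. cutoff C m x) \<longlonglongrightarrow> indicator C x"
proof (cases "x \<in> C")
  case True
  then show ?thesis unfolding cutoff_def by simp
next
  case False
  then have pos: "infdist x C > 0" using infdist_pos_not_in_closed assms by blast
  obtain N where N: "real N * infdist x C > 1"
    using reals_Archimedean3[OF pos] by blast
  have "cutoff C m x = 0" if "N \<le> m" for m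
  proof -
    have "real N * infdist x C \<le> real m * infdist x C"
      using pos that by (intro mult_right_mono) auto
    then show ?thesis unfolding cutoff_def using N by auto
  qed
  then have "(\<lambda>m. cutoff C m x) \<longlonglongrightarrow> 0"
    by (intro tendsto_eventually eventually_sequentiallyI)
  then show ?thesis using False by simp
qed

lemma integral_cutoff_tendsto:
  fixes C :: "'a::metric_space set"
  assumes "\<mu> \<in> Prob" "closed C" "C \<noteq> {}"
  shows "(\<lambda>m. integral\<^sup>L \<mu> (cutoff C m)) \<longlonglongrightarrow> measure \<mu> C"
proof -
  have C: "C \<in> sets \<mu>" using assms(1,2) by (simp add: sets_Prob)
  have "(\<lambda>m. integral\<^sup>L \<mu> (cutoff C m)) \<longlonglongrightarrow> integral\<^sup>L \<mu> (indicator C)"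
  proof (rule integral_dominated_convergence[where w="\<lambda>x. 1"])
    show "cutoff C m \<in> borel_measurable \<mu>" for m
      using measurable_Prob[OF assms(1) lipschitz_imp_measurable[OF lipschitz_cutoff]] .
    show "AE x in \<mu>. norm (cutoff C m x) \<le> 1" for m
      by (simp add: abs_cutoff_le_1)
    show "integrable \<mu> (\<lambda>x. 1::real)"
      by (rule integrable_Prob_bounded[OF assms(1)]) auto
  qed (use C cutoff_tendsto_indicator[OF assms(2,3)] in auto)
  then show ?thesis using C by simp
qed

lemma Prob_eqI_lipschitz:
  fixes \<mu> \<nu> :: "'a::metric_space measure"
  assumes P: "\<mu> \<in> Prob" "\<nu> \<in> Prob"
    and eq: "\<And>f. lipschitz f \<Longrightarrow> integral\<^sup>L \<mu> f = integral\<^sup>L \<nu> f"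
  shows "\<mu> = \<nu>"
proof (rule measure_eqI_generator_eq[where E="Collect closed" and \<Omega>=UNIV and A="\<lambda>_. UNIV"])
  show "Int_stable (Collect closed)" by (auto simp: Int_stable_def)
  show "sets \<mu> = sigma_sets UNIV (Collect closed)" "sets \<nu> = sigma_sets UNIV (Collect closed)"
    using P by (simp_all add: sets_Prob borel_eq_closed sets_measure_of)
  show "emeasure \<mu> UNIV \<noteq> \<infinity>"
    using prob_space.emeasure_space_1[OF prob_space_Prob[OF P(1)]] space_Prob[OF P(1)] by simp
  fix C :: "'a set" assume "C \<in> Collect closed"
  then have C: "closed C" by simp
  show "emeasure \<mu> C = emeasure \<nu> C"
  proof (cases "C = {}")
    case False
    have "measure \<mu> C = measure \<nu> C"
      using integral_cutoff_tendsto[OF P(1) C False] integral_cutoff_tendsto[OF P(2) C False]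
        eq[OF lipschitz_cutoff] LIMSEQ_unique by simp
    then show ?thesis
      using P by (simp add: finite_measure.emeasure_eq_measure prob_space_Prob prob_space.finite_measure)
  qed simp
qed auto

lemma measure_closed_eq_1_limit:
  fixes \<mu> :: "'a::metric_space measure"
  assumes P: "\<And>n. \<mu>s n \<in> Prob" "\<mu> \<in> Prob"
    and lim: "\<And>f. lipschitz f \<Longrightarrow> (\<lambda>n. integral\<^sup>L (\<mu>s n) f) \<longlonglongrightarrow> integral\<^sup>L \<mu> f"
    and C: "closed C" and full: "\<And>n. measure (\<mu>s n) C = 1"
  shows "measure \<mu> C = 1"
proof -
  have ne: "C \<noteq> {}" using full[of 0] by auto
  have "1 \<le> integral\<^sup>L (\<mu>s n) (cutoff C m)" for n m
  proof -
    have Cs: "C \<in> sets (\<mu>s n)" using C P(1) by (simp add: sets_Prob)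
    have "integral\<^sup>L (\<mu>s n) (indicator C) \<le> integral\<^sup>L (\<mu>s n) (cutoff C m)"
      by (intro integral_mono integrable_Prob_bounded[OF P(1), where B=1] indicator_le_cutoff)
         (use C in \<open>auto simp: abs_cutoff_le_1 lipschitz_imp_measurable lipschitz_cutoff\<close>)
    then show ?thesis using full[of n] Cs by simp
  qed
  then have "1 \<le> integral\<^sup>L \<mu> (cutoff C m)" for m
    by (intro LIMSEQ_le_const[OF lim[OF lipschitz_cutoff]]) auto
  then have "1 \<le> measure \<mu> C"
    by (intro LIMSEQ_le_const[OF integral_cutoff_tendsto[OF P(2) C ne]]) auto
  then show ?thesis
    using prob_space.prob_le_1[OF prob_space_Prob[OF P(2)]] by (meson antisym)
qed

lemma closed_supp: "closed (supp \<mu>)"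
proof -
  have "\<exists>U. open U \<and> x \<in> U \<and> U \<subseteq> - supp \<mu>" if "x \<in> - supp \<mu>" for x
  proof -
    from that have "\<not> (\<forall>U. open U \<and> x \<in> U \<longrightarrow> emeasure \<mu> U > 0)"
      unfolding supp_def by simp
    then obtain U where U: "open U" "x \<in> U" "\<not> emeasure \<mu> U > 0"
      by blast
    then have "U \<subseteq> - supp \<mu>" unfolding supp_def by auto
    then show ?thesis using U by blast
  qed
  then show ?thesis unfolding closed_def open_subopen[of "- supp \<mu>"] by blast
qed

lemma supp_nonempty:
  fixes \<mu> :: "'a::metric_space measure"
  assumes "compact (UNIV::'a set)" "\<mu> \<in> Prob"
  shows "supp \<mu> \<noteq> {}"
proof
  assume empty: "supp \<mu> = {}"
  define \<C> where "\<C> = {U. open U \<and> emeasure \<mu> U = 0}"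
  have "x \<in> \<Union>\<C>" for x
    using empty unfolding supp_def \<C>_def by (auto simp: not_gr_zero)
  then have cover: "UNIV \<subseteq> \<Union>\<C>" by blast
  obtain C where C: "C \<subseteq> \<C>" "finite C" "UNIV \<subseteq> \<Union>C"
    by (rule compactE[OF assms(1) cover]) (auto simp: \<C>_def)
  have "C \<subseteq> sets \<mu>"
    using C(1) sets_Prob[OF assms(2)] unfolding \<C>_def by auto
  then have "emeasure \<mu> (\<Union>C) \<le> (\<Sum>U\<in>C. emeasure \<mu> U)"
    using emeasure_subadditive_finite[OF C(2), of "\<lambda>U. U" \<mu>] by simp
  also have "\<dots> = 0" using C(1) by (intro sum.neutral) (auto simp: \<C>_def)
  finally have "emeasure \<mu> (\<Union>C) = 0" by simp
  moreover have "\<Union>C = UNIV" using C(3) by blast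
  ultimately show False
    using prob_space.emeasure_space_1[OF prob_space_Prob[OF assms(2)]] space_Prob[OF assms(2)] by simp
qed

section \<open>The Monge--Kantorovich distance\<close>

lemma dist_le_diameter_UNIV:
  "compact (UNIV::'a::metric_space set) \<Longrightarrow> dist (x::'a) y \<le> diameter (UNIV::'a set)"
  by (simp add: compact_imp_bounded diameter_bounded_bound)

lemma integral_diff_le_diameter:
  fixes \<mu> \<nu> :: "'a::metric_space measure"
  assumes cX: "compact (UNIV::'a set)" and P: "\<mu> \<in> Prob" "\<nu> \<in> Prob"
    and f: "L-lipschitz_on UNIV f"
  shows "integral\<^sup>L \<mu> f - integral\<^sup>L \<nu> f \<le> 2 * L * diameter (UNIV::'a set)"
proof -
  define D where "D = L * diameter (UNIV::'a set)"
  have "\<bar>f x - f z\<bar> \<le> D" for x z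
    using lipschitz_onD[OF f, of x z] dist_le_diameter_UNIV[OF cX, of x z]
      mult_left_mono lipschitz_on_nonneg[OF f]
    unfolding D_def dist_real_def by fastforce
  then have "f x \<le> f z + D" "f z - D \<le> f x" for x z
    using abs_le_D1 abs_le_D2 by (smt (verit))+
  moreover have "integrable \<mu> f" "integrable \<nu> f"
    using integrable_Prob_lipschitz[OF cX] P f lipschitzI by blast+
  ultimately have "integral\<^sup>L \<mu> f \<le> f z + D" "f z - D \<le> integral\<^sup>L \<nu> f" for z
    using P by (blast intro: integral_le_const_Prob integral_ge_const_Prob)+
  from this[of undefined] show ?thesis unfolding D_def by linarith
qed

lemma integral_diff_le_dMK:
  fixes \<mu> \<nu> :: "'a::metric_space measure"
  assumes cX: "compact (UNIV::'a set)" and P: "\<mu> \<in> Prob" "\<nu> \<in> Prob"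
    and f: "1-lipschitz_on UNIV f"
  shows "integral\<^sup>L \<mu> f - integral\<^sup>L \<nu> f \<le> dMK \<mu> \<nu>"
  unfolding dMK_def
  by (rule cSUP_upper) (use f integral_diff_le_diameter[OF cX P] in \<open>auto simp: bdd_above_def\<close>)

lemma dMK_leI:
  fixes \<mu> \<nu> :: "'a::metric_space measure"
  assumes "\<And>f. 1-lipschitz_on UNIV f \<Longrightarrow> integral\<^sup>L \<mu> f - integral\<^sup>L \<nu> f \<le> c"
  shows "dMK \<mu> \<nu> \<le> c"
  unfolding dMK_def
proof (rule cSUP_least)
  have "1-lipschitz_on UNIV (\<lambda>x::'a. 0::real)"
    by (rule lipschitz_on_le[OF lipschitz_on_constant]) simp
  then show "{f::'a \<Rightarrow> real. 1-lipschitz_on UNIV f} \<noteq> {}" by blast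
qed (use assms in auto)

lemma dMK_nonneg:
  fixes \<mu> \<nu> :: "'a::metric_space measure"
  assumes "compact (UNIV::'a set)" "\<mu> \<in> Prob" "\<nu> \<in> Prob"
  shows "0 \<le> dMK \<mu> \<nu>"
proof -
  have "1-lipschitz_on UNIV (\<lambda>x::'a. 0::real)"
    by (rule lipschitz_on_le[OF lipschitz_on_constant]) simp
  from integral_diff_le_dMK[OF assms this] show ?thesis by simp
qed

lemma integral_diff_le_lipschitz_dMK:
  fixes \<mu> \<nu> :: "'a::metric_space measure"
  assumes cX: "compact (UNIV::'a set)" and P: "\<mu> \<in> Prob" "\<nu> \<in> Prob"
    and f: "L-lipschitz_on UNIV f"
  shows "integral\<^sup>L \<mu> f - integral\<^sup>L \<nu> f \<le> L * dMK \<mu> \<nu>"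
proof (cases "L = 0")
  case True
  then have "f = (\<lambda>x. f undefined)"
    using lipschitz_onD[OF f] by fastforce
  then have "integral\<^sup>L \<mu> f = integral\<^sup>L \<nu> f"
    using integral_const_Prob[OF P(1)] integral_const_Prob[OF P(2)] by metis
  then show ?thesis using True by simp
next
  case False
  then have L: "L > 0" using lipschitz_on_nonneg[OF f] by simp
  have "1-lipschitz_on UNIV (\<lambda>x. f x / L)"
  proof (rule lipschitz_onI)
    fix x y
    show "dist (f x / L) (f y / L) \<le> 1 * dist x y"
      using lipschitz_onD[OF f, of x y] L
      by (simp add: dist_real_def diff_divide_distrib[symmetric] divide_le_eq mult.commute)
  qed simp
  from integral_diff_le_dMK[OF cX P this] L show ?thesis
    by (simp add: field_simps diff_divide_distrib[symmetric])
qed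

lemma Prob_eq_if_dMK_le_0:
  fixes \<mu> \<nu> :: "'a::metric_space measure"
  assumes cX: "compact (UNIV::'a set)" and P: "\<mu> \<in> Prob" "\<nu> \<in> Prob"
    and le0: "dMK \<mu> \<nu> \<le> 0"
  shows "\<mu> = \<nu>"
proof (rule Prob_eqI_lipschitz[OF P])
  fix f :: "'a \<Rightarrow> real" assume "lipschitz f"
  then obtain L where L: "L \<ge> 0" "L-lipschitz_on UNIV f" by (rule lipschitzE)
  then have "L-lipschitz_on UNIV (\<lambda>x. - f x)" by simp
  from integral_diff_le_lipschitz_dMK[OF cX P L(2)] integral_diff_le_lipschitz_dMK[OF cX P this]
  have "integral\<^sup>L \<mu> f - integral\<^sup>L \<nu> f \<le> L * dMK \<mu> \<nu>"
    "integral\<^sup>L \<nu> f - integral\<^sup>L \<mu> f \<le> L * dMK \<mu> \<nu>"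
    by simp_all
  moreover have "L * dMK \<mu> \<nu> \<le> 0" using L(1) le0 by (simp add: mult_nonneg_nonpos)
  ultimately show "integral\<^sup>L \<mu> f = integral\<^sup>L \<nu> f" by linarith
qed

section \<open>Limits of probability measures\<close>

text \<open>A sequence of Borel probability measures on a compact space along which all integrals of
  Lipschitz functions converge has a limit measure. Lacking the Riesz representation theorem, we
  construct it: at scale \<open>1/(k+1)\<close> a Lipschitz partition of unity subordinate to a finite net is
  formed, and products along paths give a tree of functions \<open>cell_fun p\<close> summing to 1 on every
  level. The limiting masses of these functions cut \<open>[0,1)\<close> into nested intervals; sending \<open>u\<close>
  to the limit of points of the cells whose intervals contain \<open>u\<close> pushes Lebesgue measure on
  \<open>[0,1)\<close> forward to the limit measure.\<close>

lemma compact_UNIV_finite_net: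
  assumes "compact (UNIV::'a::metric_space set)" "e > 0"
  shows "\<exists>cs::'a list. \<forall>y. \<exists>c\<in>set cs. dist c y < e"
proof -
  from assms(1)[unfolded compact_eq_totally_bounded] assms(2)
  obtain C :: "'a set" where C: "finite C" "UNIV \<subseteq> (\<Union>c\<in>C. ball c e)" by blast
  obtain cs where cs: "set cs = C" using finite_list[OF C(1)] by blast
  show ?thesis
  proof (intro exI allI)
    fix y :: 'a
    from C(2) have "y \<in> (\<Union>c\<in>C. ball c e)" by blast
    then show "\<exists>c\<in>set cs. dist c y < e" using cs by (auto simp: mem_ball)
  qed
qed

definition uniform01 :: "real measure" where
  "uniform01 = uniform_measure lborel {0..<1}"

text \<open>Maps the \<open>uniform01\<close>-null set outside \<open>[0,1)\<close> into it, so that \<open>cell_of\<close> is only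
  evaluated where it is meaningful.\<close>

definition clamp01 :: "real \<Rightarrow> real" where
  "clamp01 u = (if 0 \<le> u \<and> u < 1 then u else 0)"

lemma clamp01: "0 \<le> clamp01 u" "clamp01 u < 1"
  unfolding clamp01_def by auto

lemma measurable_clamp01 [measurable]: "clamp01 \<in> borel_measurable borel"
  unfolding clamp01_def by measurable

lemma uniform01_Prob: "uniform01 \<in> Prob"
proof -
  have "emeasure lborel {0..<1::real} = 1" using emeasure_lborel_Ico[of 0 1] by simp
  then have "prob_space uniform01"
    unfolding uniform01_def by (intro prob_space_uniform_measure) simp_all
  then show ?thesis unfolding Prob_def uniform01_def by simp
qed

lemma AE_uniform01: "AE u in uniform01. clamp01 u = u"
  unfolding uniform01_def clamp01_def by (rule AE_uniform_measureI) auto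

lemma measure_uniform01_Ico:
  assumes "0 \<le> a" "a \<le> b" "b \<le> 1"
  shows "measure uniform01 {a..<b} = b - a"
proof -
  have "emeasure uniform01 {a..<b} = emeasure lborel ({0..<1} \<inter> {a..<b}) / emeasure lborel {0..<1::real}"
    unfolding uniform01_def by (rule emeasure_uniform_measure) auto
  also have "\<dots> = ennreal (b - a)"
    using assms emeasure_lborel_Ico[of 0 1] by (simp add: Int_absorb1 divide_ennreal_def)
  finally show ?thesis using assms by (simp add: measure_def)
qed

locale lipschitz_convergent =
  fixes \<mu>s :: "nat \<Rightarrow> 'a::metric_space measure"
  assumes compact_UNIV: "compact (UNIV::'a set)"
    and Prob: "\<And>n. \<mu>s n \<in> Prob"
    and convergent: "\<And>f. lipschitz f \<Longrightarrow> convergent (\<lambda>n. integral\<^sup>L (\<mu>s n) f)"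
begin

definition lim_integral :: "('a \<Rightarrow> real) \<Rightarrow> real" where
  "lim_integral f = lim (\<lambda>n. integral\<^sup>L (\<mu>s n) f)"

lemma lim_integral: "lipschitz f \<Longrightarrow> (\<lambda>n. integral\<^sup>L (\<mu>s n) f) \<longlonglongrightarrow> lim_integral f"
  unfolding lim_integral_def using convergent convergent_LIMSEQ_iff by blast

lemma integrable: "lipschitz f \<Longrightarrow> integrable (\<mu>s n) f"
  using integrable_Prob_lipschitz[OF compact_UNIV Prob] by blast

lemma lim_integral_sum:
  assumes "finite I" "\<And>i. i \<in> I \<Longrightarrow> lipschitz (f i)"
  shows "lim_integral (\<lambda>x. \<Sum>i\<in>I. f i x) = (\<Sum>i\<in>I. lim_integral (f i))"
proof (rule LIMSEQ_unique[OF lim_integral[OF lipschitz_sum[OF assms]]])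
  show "(\<lambda>n. integral\<^sup>L (\<mu>s n) (\<lambda>x. \<Sum>i\<in>I. f i x)) \<longlonglongrightarrow> (\<Sum>i\<in>I. lim_integral (f i))"
    using assms by (simp add: integrable lim_integral tendsto_sum)
qed

lemma lim_integral_cmult:
  assumes "lipschitz f"
  shows "lim_integral (\<lambda>x. c * f x) = c * lim_integral f"
  by (rule LIMSEQ_unique[OF lim_integral[OF lipschitz_cmult[OF assms]]])
     (use tendsto_mult_left[OF lim_integral[OF assms], of c] in simp)

lemma lim_integral_const: "lim_integral (\<lambda>x. c) = c"
  by (rule LIMSEQ_unique[OF lim_integral[OF lipschitz_const]])
     (unfold integral_const_Prob[OF Prob], rule tendsto_const)

lemma abs_lim_integral_diff_le:
  assumes "lipschitz f" "lipschitz g" "\<And>x. \<bar>f x - g x\<bar> \<le> e"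
  shows "\<bar>lim_integral f - lim_integral g\<bar> \<le> e"
proof (rule LIMSEQ_le_const2)
  show "(\<lambda>n. \<bar>integral\<^sup>L (\<mu>s n) f - integral\<^sup>L (\<mu>s n) g\<bar>) \<longlonglongrightarrow> \<bar>lim_integral f - lim_integral g\<bar>"
    by (intro tendsto_intros lim_integral assms)
  have "\<bar>integral\<^sup>L (\<mu>s n) f - integral\<^sup>L (\<mu>s n) g\<bar> \<le> e" for n
    using abs_integral_le_const_Prob[OF Prob integrable[OF lipschitz_diff[OF assms(1,2)]] assms(3)]
    by (simp add: integrable assms(1,2))
  then show "\<exists>N. \<forall>n\<ge>N. \<bar>integral\<^sup>L (\<mu>s n) f - integral\<^sup>L (\<mu>s n) g\<bar> \<le> e"
    by blast
qed

lemma lim_integral_nonneg: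
  assumes "lipschitz f" "\<And>x. f x \<ge> 0"
  shows "lim_integral f \<ge> 0"
proof (rule LIMSEQ_le_const[OF lim_integral[OF assms(1)]])
  show "\<exists>N. \<forall>n\<ge>N. 0 \<le> integral\<^sup>L (\<mu>s n) f"
    using integral_ge_const_Prob[OF Prob integrable[OF assms(1)]] assms(2) by blast
qed

definition scale :: "nat \<Rightarrow> real" where
  "scale k = 1 / real (Suc k)"

lemma scale_pos: "scale k > 0"
  unfolding scale_def by simp

lemma scale_small: "e > 0 \<Longrightarrow> \<exists>k. scale k < e"
  using reals_Archimedean unfolding scale_def by (simp add: inverse_eq_divide)

definition net :: "nat \<Rightarrow> 'a list" where
  "net k = (SOME cs. \<forall>y. \<exists>c\<in>set cs. dist c y < scale k)"

lemma net_covers: "\<exists>i<length (net k). dist (net k ! i) y < scale k"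
proof -
  have "\<exists>cs::'a list. \<forall>y. \<exists>c\<in>set cs. dist c y < scale k"
    by (rule compact_UNIV_finite_net[OF compact_UNIV scale_pos])
  then have "\<forall>y. \<exists>c\<in>set (net k). dist c y < scale k"
    unfolding net_def by (rule someI_ex)
  then obtain c where "c \<in> set (net k)" "dist c y < scale k" by blast
  then show ?thesis using in_set_conv_nth[of c "net k"] by auto
qed

definition bump :: "nat \<Rightarrow> nat \<Rightarrow> 'a \<Rightarrow> real" where
  "bump k i y = min 1 (max 0 (2 - dist (net k ! i) y / scale k))"

lemma bump_bounds: "0 \<le> bump k i y" "bump k i y \<le> 1"
  unfolding bump_def by auto

lemma bump_eq_1: "dist (net k ! i) y < scale k \<Longrightarrow> bump k i y = 1"
  unfolding bump_def using scale_pos[of k] by (auto simp: divide_less_eq)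

lemma bump_pos_imp_dist: "bump k i y > 0 \<Longrightarrow> dist (net k ! i) y < 2 * scale k"
proof -
  assume "bump k i y > 0"
  then have "dist (net k ! i) y / scale k < 2" unfolding bump_def by linarith
  then show ?thesis using scale_pos[of k] by (simp add: pos_divide_less_eq)
qed

lemma lipschitz_bump: "lipschitz (bump k i)"
proof (rule lipschitzI[of "1 / scale k"], rule lipschitz_onI)
  fix y z :: 'a
  have "\<bar>bump k i y - bump k i z\<bar> \<le>
      \<bar>(2 - dist (net k ! i) y / scale k) - (2 - dist (net k ! i) z / scale k)\<bar>"
    unfolding bump_def by linarith
  also have "\<dots> = \<bar>dist (net k ! i) y - dist (net k ! i) z\<bar> / scale k"
    using scale_pos[of k] by (simp add: diff_divide_distrib[symmetric] abs_minus_commute)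
  also have "\<dots> \<le> dist y z / scale k"
    using scale_pos[of k] dist_triangle3[of "net k ! i" y z] dist_triangle3[of "net k ! i" z y]
    by (intro divide_right_mono) (auto simp: dist_commute)
  finally show "dist (bump k i y) (bump k i z) \<le> 1 / scale k * dist y z"
    by (simp add: dist_real_def)
qed (use scale_pos in \<open>simp add: less_imp_le\<close>)

definition pou :: "nat \<Rightarrow> nat \<Rightarrow> 'a \<Rightarrow> real" where
  "pou k i y = bump k i y * (\<Prod>j<i. 1 - bump k j y)"

lemma pou_nonneg: "pou k i y \<ge> 0"
  unfolding pou_def using bump_bounds by (intro mult_nonneg_nonneg prod_nonneg) auto

lemma pou_pos_imp_dist: "pou k i y > 0 \<Longrightarrow> dist (net k ! i) y < 2 * scale k"
proof -
  assume "pou k i y > 0"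
  then have "bump k i y \<noteq> 0" unfolding pou_def by auto
  then show ?thesis using bump_pos_imp_dist bump_bounds[of k i y] by simp
qed

lemma sum_pou: "(\<Sum>i<length (net k). pou k i y) = 1"
proof -
  have telescope: "(\<Sum>i<n. pou k i y) = 1 - (\<Prod>j<n. 1 - bump k j y)" for n
    by (induction n) (simp_all add: pou_def algebra_simps)
  obtain j where "j < length (net k)" "dist (net k ! j) y < scale k"
    using net_covers by blast
  then have "(\<Prod>j<length (net k). 1 - bump k j y) = 0"
    by (intro prod_zero) (use bump_eq_1 in auto)
  then show ?thesis by (simp add: telescope)
qed

lemma lipschitz_pou: "lipschitz (pou k i)"
  unfolding pou_def
  by (intro lipschitz_mult[OF compact_UNIV] lipschitz_bump lipschitz_prod[OF compact_UNIV]
      lipschitz_diff lipschitz_const) auto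

primrec cells :: "nat \<Rightarrow> nat list set" where
  "cells 0 = {[]}"
| "cells (Suc k) = (\<lambda>(i, p). i # p) ` ({..<length (net k)} \<times> cells k)"

lemma finite_cells: "finite (cells k)"
  by (induction k) auto

lemma length_cells: "p \<in> cells k \<Longrightarrow> length p = k"
  by (induction k arbitrary: p) auto

lemma Cons_in_cells_iff: "i # p \<in> cells (Suc k) \<longleftrightarrow> i < length (net k) \<and> p \<in> cells k"
  by auto

lemma cells_SucE:
  "q \<in> cells (Suc k) \<Longrightarrow> (\<And>i p. q = i # p \<Longrightarrow> i < length (net k) \<Longrightarrow> p \<in> cells k \<Longrightarrow> thesis) \<Longrightarrow> thesis"
  by auto

primrec cell_fun :: "nat list \<Rightarrow> 'a \<Rightarrow> real" where
  "cell_fun [] y = 1"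
| "cell_fun (i # p) y = pou (length p) i y * cell_fun p y"

lemma cell_fun_nonneg: "cell_fun p y \<ge> 0"
  by (induction p) (auto intro: mult_nonneg_nonneg pou_nonneg)

lemma lipschitz_cell_fun: "lipschitz (cell_fun p)"
  by (induction p) (auto intro: lipschitz_mult[OF compact_UNIV] lipschitz_const lipschitz_pou)

lemma sum_cell_fun_children:
  "p \<in> cells k \<Longrightarrow> (\<Sum>i<length (net k). cell_fun (i # p) y) = cell_fun p y"
proof -
  assume "p \<in> cells k"
  then have "(\<Sum>i<length (net k). cell_fun (i # p) y) = (\<Sum>i<length (net k). pou k i y) * cell_fun p y"
    by (simp add: length_cells sum_distrib_right)
  then show ?thesis by (simp add: sum_pou)
qed

lemma sum_cell_fun: "(\<Sum>p\<in>cells k. cell_fun p y) = 1"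
proof (induction k)
  case (Suc k)
  have inj: "inj_on (\<lambda>(i, p). i # p) ({..<length (net k)} \<times> cells k)"
    by (auto simp: inj_on_def)
  have "(\<Sum>p\<in>cells (Suc k). cell_fun p y) =
      (\<Sum>ip\<in>{..<length (net k)} \<times> cells k. cell_fun (case ip of (i, p) \<Rightarrow> i # p) y)"
    unfolding cells.simps by (rule sum.reindex[OF inj, unfolded comp_def])
  also have "\<dots> = (\<Sum>(i, p)\<in>{..<length (net k)} \<times> cells k. cell_fun (i # p) y)"
    by (rule sum.cong) auto
  also have "\<dots> = (\<Sum>p\<in>cells k. \<Sum>i<length (net k). cell_fun (i # p) y)"
    by (simp add: sum.cartesian_product[symmetric] sum.swap[of _ "{..<length (net k)}"])
  also have "\<dots> = (\<Sum>p\<in>cells k. cell_fun p y)"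
    by (rule sum.cong) (simp_all add: sum_cell_fun_children del: cell_fun.simps)
  finally show ?case using Suc by simp
qed simp

lemma cell_fun_Cons_pos:
  "cell_fun (i # p) y > 0 \<Longrightarrow> cell_fun p y > 0 \<and> dist (net (length p) ! i) y < 2 * scale (length p)"
  using pou_nonneg[of "length p" i y] cell_fun_nonneg[of p y] pou_pos_imp_dist
  by (auto simp: zero_less_mult_iff)

lemma cell_fun_append_pos: "cell_fun (pre @ p) y > 0 \<Longrightarrow> cell_fun p y > 0"
proof (induction pre)
  case (Cons i pre)
  then show ?case using cell_fun_Cons_pos[of i "pre @ p"] by simp
qed simp

lemma dist_cell_fun_pos:
  assumes "p \<in> cells (Suc k)" "cell_fun p y > 0" "cell_fun p z > 0"
  shows "dist y z < 4 * scale k"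
proof -
  obtain i p' where p: "p = i # p'" "p' \<in> cells k"
    using assms(1) by (rule cells_SucE)
  then have "dist (net k ! i) y < 2 * scale k" "dist (net k ! i) z < 2 * scale k"
    using assms(2,3) cell_fun_Cons_pos length_cells by blast+
  then show ?thesis using dist_triangle3[of y z "net k ! i"] by simp
qed

definition mass :: "nat list \<Rightarrow> real" where
  "mass p = lim_integral (cell_fun p)"

lemma mass_nonneg: "mass p \<ge> 0"
  unfolding mass_def by (rule lim_integral_nonneg[OF lipschitz_cell_fun cell_fun_nonneg])

lemma mass_Nil: "mass [] = 1"
proof -
  have "cell_fun [] = (\<lambda>y. 1)" by auto
  then show ?thesis unfolding mass_def by (simp add: lim_integral_const)
qed

lemma sum_mass_children:
  assumes "p \<in> cells k"
  shows "(\<Sum>i<length (net k). mass (i # p)) = mass p"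
proof -
  have "(\<Sum>i<length (net k). mass (i # p)) = lim_integral (\<lambda>y. \<Sum>i<length (net k). cell_fun (i # p) y)"
    unfolding mass_def by (rule lim_integral_sum[symmetric]) (auto intro: lipschitz_cell_fun)
  then show ?thesis
    unfolding mass_def sum_cell_fun_children[OF assms] by simp
qed

lemma mass_pos_imp_cell_fun_pos: "mass p > 0 \<Longrightarrow> \<exists>y. cell_fun p y > 0"
  using cell_fun_nonneg[of p] lim_integral_const[of 0]
  unfolding mass_def by (metis antisym not_less ext)

text \<open>Cell \<open>p\<close> is assigned the interval \<open>[cell_start p, cell_start p + mass p)\<close>; the intervals of the
  children of \<open>p\<close> partition the interval of \<open>p\<close> from left to right.\<close>

primrec cell_start :: "nat list \<Rightarrow> real" where
  "cell_start [] = 0"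
| "cell_start (i # p) = cell_start p + (\<Sum>j<i. mass (j # p))"

lemma cell_start_nonneg: "cell_start p \<ge> 0"
  by (induction p) (auto intro!: add_nonneg_nonneg sum_nonneg mass_nonneg)

lemma cell_end_Cons: "cell_start (i # p) + mass (i # p) = cell_start p + (\<Sum>j<Suc i. mass (j # p))"
  by simp

lemma cell_interval_Cons:
  assumes "p \<in> cells k" "i < length (net k)"
  shows "cell_start p \<le> cell_start (i # p)"
    and "cell_start (i # p) + mass (i # p) \<le> cell_start p + mass p"
proof -
  show "cell_start p \<le> cell_start (i # p)" by (simp add: sum_nonneg mass_nonneg)
  have "(\<Sum>j<Suc i. mass (j # p)) \<le> (\<Sum>j<length (net k). mass (j # p))"
    by (rule sum_mono2) (use assms(2) mass_nonneg in auto)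
  then show "cell_start (i # p) + mass (i # p) \<le> cell_start p + mass p"
    unfolding cell_end_Cons sum_mass_children[OF assms(1)] by simp
qed

lemma cell_end_le_1: "p \<in> cells k \<Longrightarrow> cell_start p + mass p \<le> 1"
proof (induction k arbitrary: p)
  case (Suc k)
  from Suc.prems obtain i p' where "p = i # p'" "i < length (net k)" "p' \<in> cells k"
    by (rule cells_SucE)
  then show ?case using cell_interval_Cons(2) Suc.IH by fastforce
qed (simp add: mass_Nil)

definition child :: "real \<Rightarrow> nat list \<Rightarrow> nat" where
  "child u p = (LEAST i. u < cell_start p + (\<Sum>j<Suc i. mass (j # p)))"

primrec cell_of :: "nat \<Rightarrow> real \<Rightarrow> nat list" where
  "cell_of 0 u = []"
| "cell_of (Suc k) u = child u (cell_of k u) # cell_of k u"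

lemma cell_of:
  assumes "0 \<le> u" "u < 1"
  shows "cell_of k u \<in> cells k \<and> cell_start (cell_of k u) \<le> u \<and>
    u < cell_start (cell_of k u) + mass (cell_of k u)"
proof (induction k)
  case (Suc k)
  define p where "p = cell_of k u"
  have IH: "p \<in> cells k" "cell_start p \<le> u" "u < cell_start p + mass p"
    using Suc unfolding p_def by auto
  define Q where "Q i \<longleftrightarrow> u < cell_start p + (\<Sum>j<Suc i. mass (j # p))" for i
  have "length (net k) > 0"
    using IH sum_mass_children[OF IH(1)] by (cases "length (net k)") auto
  moreover have "Q (length (net k) - 1)"
    unfolding Q_def using calculation IH(3) sum_mass_children[OF IH(1)] by simp
  ultimately have Qc: "Q (child u p)" and c: "child u p < length (net k)"
    unfolding child_def Q_def[symmetric] by (auto intro: LeastI order.strict_trans1[OF Least_le])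
  have "cell_start (child u p # p) \<le> u"
  proof (cases "child u p")
    case (Suc m)
    then have "\<not> Q m" unfolding child_def Q_def[symmetric] by (metis lessI not_less_Least)
    then show ?thesis unfolding Q_def using Suc by simp
  qed (use IH in simp)
  moreover have "child u p # p \<in> cells (Suc k)" using c IH(1) Cons_in_cells_iff by blast
  moreover have "u < cell_start (child u p # p) + mass (child u p # p)"
    using Qc unfolding Q_def cell_end_Cons by simp
  ultimately show ?case unfolding p_def by simp
qed (use assms in \<open>simp add: mass_Nil\<close>)

lemma cell_of_unique:
  "p \<in> cells k \<Longrightarrow> cell_start p \<le> u \<Longrightarrow> u < cell_start p + mass p \<Longrightarrow> cell_of k u = p"
proof (induction k arbitrary: p)
  case (Suc k)
  from Suc.prems(1) obtain i p' where p: "p = i # p'" "i < length (net k)" "p' \<in> cells k"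
    by (rule cells_SucE)
  then have "cell_of k u = p'"
    using Suc.IH cell_interval_Cons[OF p(3,2)] Suc.prems by fastforce
  moreover have "child u p' = i"
    unfolding child_def
  proof (rule Least_equality)
    show "u < cell_start p' + (\<Sum>j<Suc i. mass (j # p'))"
      using Suc.prems(3) p(1) cell_end_Cons[of i p'] by simp
    fix m assume m: "u < cell_start p' + (\<Sum>j<Suc m. mass (j # p'))"
    show "i \<le> m"
    proof (rule ccontr)
      assume "\<not> i \<le> m"
      then have "(\<Sum>j<Suc m. mass (j # p')) \<le> (\<Sum>j<i. mass (j # p'))"
        by (intro sum_mono2) (auto simp: mass_nonneg)
      then show False using m Suc.prems(2) p(1) by simp
    qed
  qed
  ultimately show ?case using p(1) by simp
qed simp

lemma cell_of_eq_iff: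
  assumes "0 \<le> u" "u < 1" "p \<in> cells k"
  shows "cell_of k u = p \<longleftrightarrow> cell_start p \<le> u \<and> u < cell_start p + mass p"
  using cell_of[OF assms(1,2), of k] cell_of_unique[OF assms(3)] by auto

lemma cell_of_extends: "k \<le> k' \<Longrightarrow> \<exists>pre. cell_of k' u = pre @ cell_of k u"
proof (induction k' rule: dec_induct)
  case (step k')
  then show ?case by (metis append_Cons cell_of.simps(2))
qed simp

definition cell_point :: "nat list \<Rightarrow> 'a" where
  "cell_point p = (SOME y. cell_fun p y > 0)"

definition approx_point :: "nat \<Rightarrow> real \<Rightarrow> 'a" where
  "approx_point k u = cell_point (cell_of k (clamp01 u))"

definition limit_point :: "real \<Rightarrow> 'a" where
  "limit_point u = lim (\<lambda>k. approx_point k u)"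

definition limit_measure :: "'a measure" where
  "limit_measure = distr uniform01 borel limit_point"

lemma cell_of_clamp01:
  "cell_of k (clamp01 u) \<in> cells k" "mass (cell_of k (clamp01 u)) > 0"
  using cell_of[OF clamp01, of k u] by auto

lemma cell_fun_approx_point_pos: "cell_fun (cell_of k (clamp01 u)) (approx_point k u) > 0"
  unfolding approx_point_def cell_point_def
  by (rule someI_ex[OF mass_pos_imp_cell_fun_pos[OF cell_of_clamp01(2)]])

lemma dist_approx_point:
  assumes "Suc k \<le> k'"
  shows "dist (approx_point k' u) (approx_point (Suc k) u) < 4 * scale k"
proof (rule dist_cell_fun_pos[OF cell_of_clamp01(1)])
  obtain pre where pre: "cell_of k' (clamp01 u) = pre @ cell_of (Suc k) (clamp01 u)"
    using cell_of_extends[OF assms] by blast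
  have "cell_fun (pre @ cell_of (Suc k) (clamp01 u)) (approx_point k' u) > 0"
    using cell_fun_approx_point_pos[of k' u] unfolding pre .
  then show "cell_fun (cell_of (Suc k) (clamp01 u)) (approx_point k' u) > 0"
    by (rule cell_fun_append_pos)
qed (rule cell_fun_approx_point_pos)

lemma approx_point_tendsto: "(\<lambda>k. approx_point k u) \<longlonglongrightarrow> limit_point u"
proof -
  have "Cauchy (\<lambda>k. approx_point k u)"
  proof (rule metric_CauchyI)
    fix e :: real assume "e > 0"
    then obtain k where k: "scale k < e / 8" using scale_small[of "e / 8"] by auto
    have "dist (approx_point m u) (approx_point n u) < e" if "Suc k \<le> m" "Suc k \<le> n" for m n
      using dist_approx_point[OF that(1), of u] dist_approx_point[OF that(2), of u] k
        dist_triangle2[of "approx_point m u" "approx_point n u" "approx_point (Suc k) u"] by simp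
    then show "\<exists>M. \<forall>m\<ge>M. \<forall>n\<ge>M. dist (approx_point m u) (approx_point n u) < e" by blast
  qed
  moreover have "uniform_space_class.complete (UNIV::'a set)"
    using compact_UNIV compact_imp_complete by blast
  ultimately have "convergent (\<lambda>k. approx_point k u)"
    unfolding complete_def convergent_def by blast
  then show ?thesis unfolding limit_point_def by (simp add: convergent_LIMSEQ_iff)
qed

lemma dist_limit_point: "dist (limit_point u) (approx_point (Suc k) u) \<le> 4 * scale k"
proof (rule LIMSEQ_le_const2)
  show "(\<lambda>k'. dist (approx_point k' u) (approx_point (Suc k) u)) \<longlonglongrightarrow>
      dist (limit_point u) (approx_point (Suc k) u)"
    by (intro tendsto_intros approx_point_tendsto)
  show "\<exists>N. \<forall>n\<ge>N. dist (approx_point n u) (approx_point (Suc k) u) \<le> 4 * scale k"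
    using dist_approx_point by (intro exI[of _ "Suc k"]) (auto intro: less_imp_le)
qed

lemma measurable_cell_of: "cell_of k \<in> borel \<rightarrow>\<^sub>M count_space UNIV"
proof (induction k)
  case (Suc k)
  have "(\<lambda>u. (\<lambda>p u. child u p # p) (cell_of k u) u) \<in> borel \<rightarrow>\<^sub>M count_space UNIV"
  proof (rule measurable_compose_countable[OF _ Suc])
    fix p
    have "(\<lambda>u. child u p) \<in> borel \<rightarrow>\<^sub>M count_space UNIV"
      unfolding child_def by (rule measurable_Least) measurable
    then show "(\<lambda>u. child u p # p) \<in> borel \<rightarrow>\<^sub>M count_space UNIV"
      by simp
  qed
  then show ?case by simp
qed simp

lemma measurable_approx_point: "approx_point k \<in> borel_measurable borel"
  unfolding approx_point_def[abs_def]
  using measurable_compose[OF measurable_compose[OF measurable_clamp01 measurable_cell_of],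
      of cell_point borel] by simp

lemma measurable_limit_point: "limit_point \<in> borel_measurable borel"
  by (rule borel_measurable_LIMSEQ_metric[OF measurable_approx_point approx_point_tendsto])

lemma limit_measure_Prob: "limit_measure \<in> Prob"
proof -
  have "prob_space limit_measure"
    unfolding limit_measure_def
    using prob_space.prob_space_distr[OF prob_space_Prob[OF uniform01_Prob]]
      measurable_Prob[OF uniform01_Prob measurable_limit_point] by blast
  then show ?thesis unfolding Prob_def limit_measure_def by simp
qed

text \<open>\<open>approx_point k\<close> takes the value \<open>cell_point p\<close> exactly on the interval of the cell \<open>p\<close>,
  which has length \<open>mass p\<close>.\<close>

lemma integral_approx_point:
  "integral\<^sup>L uniform01 (\<lambda>u. f (approx_point k u)) = (\<Sum>p\<in>cells k. f (cell_point p) * mass p)"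
proof -
  define I where "I p = {cell_start p..<cell_start p + mass p}" for p
  have approx_point_eq:
    "f (approx_point k u) = (\<Sum>p\<in>cells k. f (cell_point p) * indicator (I p) (clamp01 u))" for u
  proof -
    have "(\<Sum>p\<in>cells k. f (cell_point p) * indicator (I p) (clamp01 u)) =
        (\<Sum>p\<in>cells k. if cell_of k (clamp01 u) = p then f (cell_point p) else 0)"
      by (rule sum.cong) (auto simp: I_def cell_of_eq_iff[OF clamp01] indicator_def)
    then show ?thesis
      using finite_cells cell_of_clamp01(1)[of k u] by (simp add: approx_point_def)
  qed
  have integral_I: "integral\<^sup>L uniform01 (\<lambda>u. indicator (I p) (clamp01 u)) = mass p"
    if "p \<in> cells k" for p
  proof -
    have "AE u in uniform01. indicator (I p) (clamp01 u) = (indicator (I p) u :: real)"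
      using AE_uniform01 by eventually_elim simp
    then have "integral\<^sup>L uniform01 (\<lambda>u. indicator (I p) (clamp01 u)) =
        integral\<^sup>L uniform01 (\<lambda>u. indicator (I p) u :: real)"
      by (intro integral_cong_AE) (auto intro!: measurable_Prob[OF uniform01_Prob] simp: I_def)
    also have "\<dots> = measure uniform01 (I p)"
      using sets_Prob[OF uniform01_Prob] by (simp add: I_def)
    also have "\<dots> = mass p"
      unfolding I_def using cell_start_nonneg mass_nonneg cell_end_le_1[OF that]
      by (subst measure_uniform01_Ico) auto
    finally show ?thesis .
  qed
  have integrable_I: "integrable uniform01 (\<lambda>u. f (cell_point p) * indicator (I p) (clamp01 u))" for p
  proof (rule integrable_Prob_bounded[OF uniform01_Prob])
    show "(\<lambda>u. f (cell_point p) * indicator (I p) (clamp01 u)) \<in> borel_measurable borel"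
      unfolding I_def by measurable
    show "\<bar>f (cell_point p) * indicator (I p) (clamp01 u)\<bar> \<le> \<bar>f (cell_point p)\<bar>" for u
      by (simp add: indicator_def)
  qed
  have "integral\<^sup>L uniform01 (\<lambda>u. f (approx_point k u)) =
      (\<Sum>p\<in>cells k. integral\<^sup>L uniform01 (\<lambda>u. f (cell_point p) * indicator (I p) (clamp01 u)))"
    unfolding approx_point_eq by (rule Bochner_Integration.integral_sum[OF integrable_I])
  also have "\<dots> = (\<Sum>p\<in>cells k. f (cell_point p) * mass p)"
    by (intro sum.cong) (simp_all add: integral_I)
  finally show ?thesis .
qed

lemma abs_integral_limit_point_approx:
  assumes f: "L-lipschitz_on UNIV f"
  shows "\<bar>integral\<^sup>L uniform01 (\<lambda>u. f (limit_point u)) -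
      integral\<^sup>L uniform01 (\<lambda>u. f (approx_point (Suc k) u))\<bar> \<le> L * (4 * scale k)"
proof -
  obtain B where B: "\<And>x. \<bar>f x\<bar> \<le> B"
    using continuous_on_compact_UNIV_bounded[OF compact_UNIV lipschitz_on_continuous_on[OF f]]
    by blast
  have fm: "f \<in> borel_measurable borel"
    using lipschitz_imp_measurable[OF lipschitzI[OF f]] .
  have int: "integrable uniform01 (\<lambda>u. f (limit_point u))"
    "integrable uniform01 (\<lambda>u. f (approx_point (Suc k) u))"
    using B fm measurable_limit_point measurable_approx_point
    by (auto intro!: integrable_Prob_bounded[OF uniform01_Prob, where B=B])
  have "\<bar>f (limit_point u) - f (approx_point (Suc k) u)\<bar> \<le> L * (4 * scale k)" for u
    using lipschitz_onD[OF f, of "limit_point u" "approx_point (Suc k) u"]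
      dist_limit_point[of u k] lipschitz_on_nonneg[OF f]
    by (simp add: dist_real_def) (meson mult_left_mono order_trans)
  from abs_integral_le_const_Prob[OF uniform01_Prob Bochner_Integration.integrable_diff[OF int] this]
  show ?thesis using int by simp
qed

lemma abs_diff_cell_point_le:
  assumes f: "L-lipschitz_on UNIV f" and p: "p \<in> cells (Suc k)"
  shows "\<bar>(f y - f (cell_point p)) * cell_fun p y\<bar> \<le> L * (4 * scale k) * cell_fun p y"
proof (cases "cell_fun p y > 0")
  case True
  then have "cell_fun p (cell_point p) > 0"
    unfolding cell_point_def by (rule someI)
  then have "dist y (cell_point p) \<le> 4 * scale k"
    using dist_cell_fun_pos[OF p True] by fastforce
  then have "\<bar>f y - f (cell_point p)\<bar> \<le> L * (4 * scale k)"
    using lipschitz_onD[OF f, of y "cell_point p"] lipschitz_on_nonneg[OF f]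
    by (simp add: dist_real_def) (meson mult_left_mono order_trans)
  then show ?thesis
    using cell_fun_nonneg[of p y] by (simp add: abs_mult mult_right_mono)
next
  case False
  then show ?thesis using cell_fun_nonneg[of p y] by simp
qed

lemma abs_lim_integral_approx:
  assumes f: "L-lipschitz_on UNIV f"
  shows "\<bar>lim_integral f - (\<Sum>p\<in>cells (Suc k). f (cell_point p) * mass p)\<bar> \<le> L * (4 * scale k)"
proof -
  define G where "G y = (\<Sum>p\<in>cells (Suc k). f (cell_point p) * cell_fun p y)" for y
  have "lim_integral G = (\<Sum>p\<in>cells (Suc k). f (cell_point p) * mass p)"
    unfolding G_def[abs_def] mass_def
    by (subst lim_integral_sum)
       (auto intro: finite_cells lipschitz_cmult lipschitz_cell_fun simp: lim_integral_cmult[OF lipschitz_cell_fun])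
  moreover have "\<bar>f y - G y\<bar> \<le> L * (4 * scale k)" for y
  proof -
    have "f y - G y = (\<Sum>p\<in>cells (Suc k). (f y - f (cell_point p)) * cell_fun p y)"
      using sum_cell_fun[where k="Suc k" and y=y]
      by (simp add: G_def left_diff_distrib sum_subtractf flip: sum_distrib_left)
    also have "\<bar>\<dots>\<bar> \<le> (\<Sum>p\<in>cells (Suc k). L * (4 * scale k) * cell_fun p y)"
      by (rule order_trans[OF sum_abs sum_mono]) (rule abs_diff_cell_point_le[OF f])
    also have "\<dots> = L * (4 * scale k)"
      using sum_cell_fun[where k="Suc k" and y=y] by (simp flip: sum_distrib_left)
    finally show ?thesis .
  qed
  then have "\<bar>lim_integral f - lim_integral G\<bar> \<le> L * (4 * scale k)"
    unfolding G_def
    by (intro abs_lim_integral_diff_le lipschitzI[OF f] lipschitz_sum finite_cells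
        lipschitz_cmult lipschitz_cell_fun)
  ultimately show ?thesis by simp
qed

lemma lim_integral_eq_limit_measure:
  assumes "lipschitz f"
  shows "lim_integral f = integral\<^sup>L limit_measure f"
proof -
  obtain L where L: "L \<ge> 0" "L-lipschitz_on UNIV f"
    using assms by (rule lipschitzE)
  have "integral\<^sup>L limit_measure f = integral\<^sup>L uniform01 (\<lambda>u. f (limit_point u))"
    unfolding limit_measure_def
    by (rule integral_distr[OF measurable_Prob[OF uniform01_Prob measurable_limit_point]
          lipschitz_imp_measurable[OF assms]])
  then have bound: "\<bar>lim_integral f - integral\<^sup>L limit_measure f\<bar> \<le> 8 * L * scale k" for k
    using abs_integral_limit_point_approx[OF L(2), of k] abs_lim_integral_approx[OF L(2), of k]
      integral_approx_point[of f "Suc k"]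
    by linarith
  show ?thesis
  proof (rule ccontr)
    define a where "a = \<bar>lim_integral f - integral\<^sup>L limit_measure f\<bar>"
    assume "lim_integral f \<noteq> integral\<^sup>L limit_measure f"
    then have "a > 0" unfolding a_def by simp
    then obtain k where k: "scale k < a / (8 * L + 1)"
      using scale_small[of "a / (8 * L + 1)"] L(1) by auto
    have "8 * L * scale k \<le> (8 * L + 1) * scale k" using scale_pos[of k] by simp
    also have "\<dots> < a" using k L(1) by (simp add: field_simps)
    finally show False using bound[of k] unfolding a_def by simp
  qed
qed

end

theorem lipschitz_convergent_limit:
  fixes \<mu>s :: "nat \<Rightarrow> 'a::metric_space measure"
  assumes "compact (UNIV::'a set)" "\<And>n. \<mu>s n \<in> Prob"
    and "\<And>f. lipschitz f \<Longrightarrow> convergent (\<lambda>n. integral\<^sup>L (\<mu>s n) f)"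
  obtains \<mu> where "\<mu> \<in> Prob" "\<And>f. lipschitz f \<Longrightarrow> (\<lambda>n. integral\<^sup>L (\<mu>s n) f) \<longlonglongrightarrow> integral\<^sup>L \<mu> f"
proof -
  interpret lipschitz_convergent \<mu>s using assms by unfold_locales
  show ?thesis
    using that limit_measure_Prob lim_integral lim_integral_eq_limit_measure by metis
qed

section \<open>Hausdorff distance\<close>

lemma bdd_above_infdist: "bounded A \<Longrightarrow> bdd_above ((\<lambda>a. infdist a B) ` A)"
proof (cases "B = {}")
  case False
  assume "bounded A"
  obtain b where "b \<in> B" using False by blast
  moreover obtain e where "\<And>a. a \<in> A \<Longrightarrow> dist b a \<le> e"
    using \<open>bounded A\<close> unfolding bounded_any_center[of _ b] by blast
  ultimately show ?thesis
    by (intro bdd_aboveI2[of _ _ e]) (metis dist_commute infdist_le order_trans)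
qed (auto simp: infdist_def bdd_above_def)

lemma infdist_le_hausdorff_dist: "bounded A \<Longrightarrow> a \<in> A \<Longrightarrow> infdist a B \<le> hausdorff_dist A B"
  unfolding hausdorff_dist_def
  by (rule max.coboundedI1, rule cSUP_upper) (auto simp: bdd_above_infdist)

lemma hausdorff_dist_commute: "hausdorff_dist A B = hausdorff_dist B A"
  unfolding hausdorff_dist_def by (simp add: max.commute)

lemma hausdorff_dist_nonneg: "bounded A \<Longrightarrow> A \<noteq> {} \<Longrightarrow> 0 \<le> hausdorff_dist A B"
  by (meson all_not_in_conv infdist_le_hausdorff_dist infdist_nonneg order_trans)

lemma hausdorff_dist_le:
  assumes "A \<noteq> {}" "B \<noteq> {}" "\<And>a. a \<in> A \<Longrightarrow> infdist a B \<le> c" "\<And>b. b \<in> B \<Longrightarrow> infdist b A \<le> c"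
  shows "hausdorff_dist A B \<le> c"
  unfolding hausdorff_dist_def by (intro max.boundedI cSUP_least) (use assms in auto)

lemma hausdorff_dist_le_0_imp_subset:
  assumes "bounded A" "closed B" "B \<noteq> {}" "hausdorff_dist A B \<le> 0"
  shows "A \<subseteq> B"
proof
  fix a assume "a \<in> A"
  then have "infdist a B = 0"
    using infdist_le_hausdorff_dist[OF assms(1)] infdist_nonneg[of a B] assms(4) by (meson antisym order_trans)
  then show "a \<in> B" using in_closed_iff_infdist_zero[OF assms(2,3)] by simp
qed

lemma le_mult_infdist:
  assumes "B \<noteq> {}" "c \<ge> 0" "\<And>b. b \<in> B \<Longrightarrow> z \<le> c * dist a b"
  shows "z \<le> c * infdist a B"
proof (cases "c = 0")
  case True
  then show ?thesis using assms(1,3) by auto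
next
  case False
  then have c: "c > 0" using assms(2) by simp
  have "z / c \<le> infdist a B"
    unfolding infdist_notempty[OF assms(1)]
    by (rule cINF_greatest[OF assms(1)]) (use assms(3) c in \<open>simp add: divide_le_eq mult.commute\<close>)
  then show ?thesis using c by (simp add: divide_le_eq mult.commute)
qed

lemma hausdorff_dist_images_le:
  fixes A B :: "'a::metric_space set" and g :: "'w \<Rightarrow> 'a \<Rightarrow> 'a"
  assumes A: "A \<noteq> {}" "bounded A" and B: "B \<noteq> {}" "bounded B" and W: "W \<noteq> {}" and c: "c \<ge> 0"
    and g: "\<And>w x y. w \<in> W \<Longrightarrow> dist (g w x) (g w y) \<le> c * dist x y"
  shows "hausdorff_dist {g w a | w a. w \<in> W \<and> a \<in> A} {g w b | w b. w \<in> W \<and> b \<in> B}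
    \<le> c * hausdorff_dist A B"
proof -
  have image: "infdist (g w x) {g w y | w y. w \<in> W \<and> y \<in> Y} \<le> c * hausdorff_dist X Y"
    if "bounded X" "Y \<noteq> {}" "w \<in> W" "x \<in> X" for X Y w x
  proof -
    have "infdist (g w x) {g w y | w y. w \<in> W \<and> y \<in> Y} \<le> c * infdist x Y"
    proof (rule le_mult_infdist[OF that(2) c])
      fix y assume "y \<in> Y"
      then have "infdist (g w x) {g w y | w y. w \<in> W \<and> y \<in> Y} \<le> dist (g w x) (g w y)"
        using that(3) by (intro infdist_le) blast
      also have "\<dots> \<le> c * dist x y" using g[OF that(3)] .
      finally show "infdist (g w x) {g w y | w y. w \<in> W \<and> y \<in> Y} \<le> c * dist x y" .
    qed
    also have "\<dots> \<le> c * hausdorff_dist X Y"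
      using infdist_le_hausdorff_dist[OF that(1,4)] c by (rule mult_left_mono)
    finally show ?thesis .
  qed
  show ?thesis
  proof (rule hausdorff_dist_le)
    show "{g w a | w a. w \<in> W \<and> a \<in> A} \<noteq> {}" "{g w b | w b. w \<in> W \<and> b \<in> B} \<noteq> {}"
      using A B W by blast+
  next
    fix y assume "y \<in> {g w a | w a. w \<in> W \<and> a \<in> A}"
    then show "infdist y {g w b | w b. w \<in> W \<and> b \<in> B} \<le> c * hausdorff_dist A B"
      using image[OF A(2) B(1)] by blast
  next
    fix y assume "y \<in> {g w b | w b. w \<in> W \<and> b \<in> B}"
    then show "infdist y {g w a | w a. w \<in> W \<and> a \<in> A} \<le> c * hausdorff_dist A B"
      using image[OF B(2) A(1)] hausdorff_dist_commute[of A B] by auto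
  qed
qed

lemma compact_UNIV_nest:
  fixes C :: "nat \<Rightarrow> 'a::topological_space set"
  assumes "compact (UNIV::'a set)" "\<And>n. closed (C n)" "\<And>n. C n \<noteq> {}" "decseq C"
  shows "(\<Inter>n. C n) \<noteq> {}"
  using compact_space_imp_nest[of euclidean C] assms by (simp add: compact_space_def)

section \<open>Real sequences\<close>

function renewal_seq :: "real \<Rightarrow> (nat \<Rightarrow> real) \<Rightarrow> nat \<Rightarrow> real" where
  "renewal_seq c a n = a n + c * (\<Sum>i<n. a i * renewal_seq c a (n - 1 - i))"
  by auto
termination by (relation "Wellfounded.measure (\<lambda>(c, a, n). n)") auto

declare renewal_seq.simps [simp del]

lemma renewal_seq_nonneg:
  assumes "c \<ge> 0" "\<And>i. a i \<ge> 0"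
  shows "renewal_seq c a n \<ge> 0"
proof (induction n rule: less_induct)
  case (less n)
  then have "(\<Sum>i<n. a i * renewal_seq c a (n - 1 - i)) \<ge> 0"
    using assms by (auto intro!: sum_nonneg mult_nonneg_nonneg)
  then show ?case using assms by (subst renewal_seq.simps) auto
qed

lemma sum_convolution_le:
  fixes a b :: "nat \<Rightarrow> real"
  assumes "\<And>i. a i \<ge> 0" "\<And>i. b i \<ge> 0"
  shows "(\<Sum>n<N. \<Sum>i<n. a i * b (n - 1 - i)) \<le> (\<Sum>i<N. a i) * (\<Sum>j<N. b j)"
proof -
  have "(\<Sum>n<N. \<Sum>i<n. a i * b (n - 1 - i)) = (\<Sum>i<N. a i * (\<Sum>j<N - 1 - i. b j))"
  proof (induction N)
    case (Suc N)
    have "(\<Sum>j<N - i. b j) = (\<Sum>j<N - 1 - i. b j) + b (N - 1 - i)" if "i < N" for i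
    proof -
      have "N - i = Suc (N - 1 - i)" using that by simp
      then show ?thesis by simp
    qed
    with Suc show ?case by (simp add: sum.distrib[symmetric] distrib_left)
  qed simp
  also have "\<dots> \<le> (\<Sum>i<N. a i * (\<Sum>j<N. b j))"
    by (intro sum_mono mult_left_mono sum_mono2) (use assms in auto)
  finally show ?thesis by (simp add: sum_distrib_right)
qed

lemma sum_renewal_seq_le:
  assumes c: "c \<ge> 0" and a: "\<And>i. a i \<ge> 0" and A: "\<And>N. (\<Sum>i<N. a i) \<le> A" and cA: "c * A < 1"
  shows "(\<Sum>n<N. renewal_seq c a n) \<le> A / (1 - c * A)"
proof -
  define S where "S = (\<Sum>n<N. renewal_seq c a n)"
  have S: "S \<ge> 0" unfolding S_def by (intro sum_nonneg renewal_seq_nonneg c a)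
  have "S = (\<Sum>n<N. a n + c * (\<Sum>i<n. a i * renewal_seq c a (n - 1 - i)))"
    unfolding S_def by (rule sum.cong[OF refl]) (rule renewal_seq.simps)
  also have "\<dots> = (\<Sum>n<N. a n) + c * (\<Sum>n<N. \<Sum>i<n. a i * renewal_seq c a (n - 1 - i))"
    by (simp add: sum.distrib sum_distrib_left)
  also have "\<dots> \<le> A + c * (A * S)"
  proof (intro add_mono A mult_left_mono c)
    have "(\<Sum>n<N. \<Sum>i<n. a i * renewal_seq c a (n - 1 - i)) \<le> (\<Sum>i<N. a i) * S"
      unfolding S_def by (intro sum_convolution_le a renewal_seq_nonneg c)
    also have "\<dots> \<le> A * S" using A S by (intro mult_right_mono) auto
    finally show "(\<Sum>n<N. \<Sum>i<n. a i * renewal_seq c a (n - 1 - i)) \<le> A * S" .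
  qed
  finally have "S * (1 - c * A) \<le> A" by (simp add: algebra_simps)
  then show ?thesis unfolding S_def using cA by (simp add: pos_le_divide_eq)
qed

lemma renewal_seq_tendsto_0:
  assumes "c \<ge> 0" "\<And>i. a i \<ge> 0" "\<And>N. (\<Sum>i<N. a i) \<le> A" "c * A < 1"
  shows "renewal_seq c a \<longlonglongrightarrow> 0"
  using summable_LIMSEQ_zero summableI_nonneg_bounded renewal_seq_nonneg sum_renewal_seq_le assms
  by metis

lemma Cauchy_if_shift_bound:
  fixes a :: "nat \<Rightarrow> real"
  assumes bound: "\<And>n k. \<bar>a (n + k) - a n\<bar> \<le> e n" and e: "e \<longlonglongrightarrow> 0"
  shows "Cauchy a"
proof (rule metric_CauchyI)
  fix \<epsilon> :: real assume "\<epsilon> > 0"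
  then obtain N where N: "\<bar>e N\<bar> < \<epsilon> / 2"
    using LIMSEQ_D[OF e, of "\<epsilon> / 2"] by auto
  have tail: "\<bar>a m - a N\<bar> \<le> e N" if "N \<le> m" for m
    using bound[of N "m - N"] that by simp
  have "dist (a m) (a n) < \<epsilon>" if "N \<le> m" "N \<le> n" for m n
    using tail[OF that(1)] tail[OF that(2)] N unfolding dist_real_def by linarith
  then show "\<exists>M. \<forall>m\<ge>M. \<forall>n\<ge>M. dist (a m) (a n) < \<epsilon>" by blast
qed

section \<open>Iterated function systems with place-dependent probabilities\<close>

lemma tau_seq_append: "tau_seq f (xs @ ys) = tau_seq f ys \<circ> tau_seq f xs"
  by (induction xs) (auto simp: comp_assoc)

lemma tau_seq_snoc: "tau_seq f (w @ [l]) x = f l (tau_seq f w x)"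
  by (simp add: tau_seq_append)

locale place_dependent_ifs =
  fixes \<tau> :: "'l::metric_space \<Rightarrow> 'x::metric_space \<Rightarrow> 'x"
    and q :: "'x \<Rightarrow> 'l measure"
    and M :: nat and s r t :: real
  assumes compact_X: "compact (UNIV :: 'x set)"
    and compact_L: "compact (UNIV :: 'l set)"
    and tau_cont: "continuous_on UNIV (\<lambda>p :: 'l \<times> 'x. \<tau> (fst p) (snd p))"
    and q_Prob: "\<And>x. q x \<in> Prob"
    and tau_1_lipschitz: "\<And>l. 1-lipschitz_on UNIV (\<tau> l)"
    and M_pos: "M \<ge> 1" and s_pos: "0 < s" and s_less_1: "s < 1"
    and tau_seq_contraction: "\<And>ls. length ls = M \<Longrightarrow> s-lipschitz_on UNIV (tau_seq \<tau> ls)"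
    and r_nonneg: "r \<ge> 0" and dist_tau_le: "\<And>l1 l2 x. dist (\<tau> l1 x) (\<tau> l2 x) \<le> r * dist l1 l2"
    and t_nonneg: "t \<ge> 0" and dMK_q_le: "\<And>x y. dMK (q x) (q y) \<le> t * dist x y"
    and q_open_pos: "\<And>A x. open A \<Longrightarrow> A \<noteq> {} \<Longrightarrow> measure (q x) A > 0"
    and small: "s + r * real M * t < 1"
begin

abbreviation B :: "('x \<Rightarrow> real) \<Rightarrow> 'x \<Rightarrow> real" where
  "B \<equiv> transfer_op q \<tau>"

abbreviation T :: "'x measure \<Rightarrow> 'x measure" where
  "T \<equiv> markov_op q \<tau>"

abbreviation F :: "'x set \<Rightarrow> 'x set" where
  "F \<equiv> fractal_op \<tau>"

lemma continuous_on_tau_param: "continuous_on UNIV (\<lambda>l. \<tau> l x)"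
  using continuous_on_compose[of UNIV "\<lambda>l. (l, x)" "\<lambda>p. \<tau> (fst p) (snd p)"]
    continuous_on_subset[OF tau_cont] by (simp add: continuous_intros comp_def)

lemma measurable_tau_param: "(\<lambda>l. \<tau> l x) \<in> q y \<rightarrow>\<^sub>M borel"
  using measurable_Prob[OF q_Prob borel_measurable_continuous_onI[OF continuous_on_tau_param]] .

lemma lipschitz_on_tau_param:
  assumes "L-lipschitz_on UNIV h"
  shows "(L * r)-lipschitz_on UNIV (\<lambda>l. h (\<tau> l x))"
proof (rule lipschitz_onI)
  have L: "L \<ge> 0" using assms lipschitz_on_nonneg by blast
  then show "0 \<le> L * r" using r_nonneg by simp
  fix l1 l2
  have "dist (h (\<tau> l1 x)) (h (\<tau> l2 x)) \<le> L * dist (\<tau> l1 x) (\<tau> l2 x)"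
    using lipschitz_onD[OF assms] by simp
  also have "\<dots> \<le> L * (r * dist l1 l2)" using dist_tau_le L by (intro mult_left_mono) auto
  finally show "dist (h (\<tau> l1 x)) (h (\<tau> l2 x)) \<le> L * r * dist l1 l2" by (simp add: mult.assoc)
qed

lemma integrable_q_continuous: "continuous_on UNIV h \<Longrightarrow> integrable (q z) (\<lambda>l. h (\<tau> l x) :: real)"
  by (rule integrable_Prob_continuous[OF compact_L q_Prob])
     (rule continuous_on_compose2[OF _ continuous_on_tau_param subset_UNIV])

text \<open>\<open>c\<close> bounds the displacement of the points; the second term accounts for the change of the
  probabilities \<open>q\<close>, via (H2) and (H3).\<close>

lemma transfer_op_diff_le:
  assumes h: "L-lipschitz_on UNIV h"
    and c: "\<And>l. h (\<tau> l x) - h (\<tau> l y) \<le> c"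
  shows "B h x - B h y \<le> c + L * r * t * dist x y"
proof -
  have L: "L \<ge> 0" using h lipschitz_on_nonneg by blast
  have int: "integrable (q x) (\<lambda>l. h (\<tau> l x))" "integrable (q x) (\<lambda>l. h (\<tau> l y))"
    using integrable_q_continuous[OF lipschitz_on_continuous_on[OF h]] by blast+
  have "integral\<^sup>L (q x) (\<lambda>l. h (\<tau> l x)) - integral\<^sup>L (q x) (\<lambda>l. h (\<tau> l y)) \<le> c"
    using integral_le_const_Prob[OF q_Prob Bochner_Integration.integrable_diff[OF int] c] int by simp
  moreover have "integral\<^sup>L (q x) (\<lambda>l. h (\<tau> l y)) - integral\<^sup>L (q y) (\<lambda>l. h (\<tau> l y))
      \<le> (L * r) * dMK (q x) (q y)"
    by (rule integral_diff_le_lipschitz_dMK[OF compact_L q_Prob q_Prob lipschitz_on_tau_param[OF h]])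
  moreover have "(L * r) * dMK (q x) (q y) \<le> (L * r) * (t * dist x y)"
    using dMK_q_le[of x y] L r_nonneg by (intro mult_left_mono) simp_all
  ultimately show ?thesis unfolding transfer_op_def by (simp add: mult.assoc)
qed

lemma lipschitz_on_of_diff_le:
  fixes h :: "'x \<Rightarrow> real"
  assumes "L \<ge> 0" "\<And>x y. h x - h y \<le> L * dist x y"
  shows "L-lipschitz_on UNIV h"
proof (rule lipschitz_onI)
  fix x y
  show "dist (h x) (h y) \<le> L * dist x y"
    using assms(2)[of x y] assms(2)[of y x] by (simp add: dist_real_def abs_le_iff dist_commute)
qed (rule assms(1))

lemma lipschitz_on_transfer_op:
  assumes h: "L-lipschitz_on UNIV h"
  shows "(L * (1 + r * t))-lipschitz_on UNIV (B h)"
proof (rule lipschitz_on_of_diff_le)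
  have L: "L \<ge> 0" using h lipschitz_on_nonneg by blast
  then show "0 \<le> L * (1 + r * t)" using r_nonneg t_nonneg by simp
  fix x y
  have "h (\<tau> l x) - h (\<tau> l y) \<le> L * dist x y" for l
    using lipschitz_onD[OF h, of "\<tau> l x" "\<tau> l y"] lipschitz_onD[OF tau_1_lipschitz, of x y l] L
    by (simp add: dist_real_def) (meson abs_le_D1 mult_left_mono order_trans)
  from transfer_op_diff_le[OF h this] show "B h x - B h y \<le> L * (1 + r * t) * dist x y"
    by (simp add: algebra_simps)
qed

lemma lipschitz_transfer_op: "lipschitz h \<Longrightarrow> lipschitz (B h)"
  by (erule lipschitzE) (rule lipschitzI[OF lipschitz_on_transfer_op])

subsection \<open>The Markov operator as a Giry-monad bind\<close>

definition kernel :: "'x \<Rightarrow> 'x measure" where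
  "kernel x = distr (q x) borel (\<lambda>l. \<tau> l x)"

lemma kernel_Prob: "kernel x \<in> Prob"
  using prob_space.prob_space_distr[OF prob_space_Prob[OF q_Prob] measurable_tau_param]
  unfolding Prob_def kernel_def by simp

lemma integral_kernel: "continuous_on UNIV f \<Longrightarrow> integral\<^sup>L (kernel x) f = B f x"
  unfolding kernel_def transfer_op_def
  by (rule integral_distr[OF measurable_tau_param borel_measurable_continuous_onI])

lemma emeasure_kernel:
  "A \<in> sets borel \<Longrightarrow> emeasure (kernel x) A = emeasure (q x) ((\<lambda>l. \<tau> l x) -` A \<inter> space (q x))"
  unfolding kernel_def by (rule emeasure_distr[OF measurable_tau_param])

text \<open>Measurability of the kernel is checked on closed sets, whose measures are limits of
  integrals of the continuous functions \<open>B (cutoff A m)\<close>.\<close>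

lemma measurable_kernel: "kernel \<in> borel \<rightarrow>\<^sub>M subprob_algebra borel"
proof (rule measurable_subprob_algebra_generated[where G="Collect closed" and \<Omega>=UNIV])
  show "sets borel = sigma_sets UNIV (Collect closed)"
    by (simp add: borel_eq_closed sets_measure_of)
  show "Int_stable (Collect closed)" by (auto simp: Int_stable_def)
  show "Collect closed \<subseteq> Pow UNIV" by simp
  show "subprob_space (kernel x)" for x
    by (rule prob_space_imp_subprob_space[OF prob_space_Prob[OF kernel_Prob]])
  show "sets (kernel x) = sets borel" for x by (rule sets_Prob[OF kernel_Prob])
  have emeasure_eq: "emeasure (kernel x) A = ennreal (measure (kernel x) A)" for x A
    using finite_measure.emeasure_eq_measure[OF prob_space.finite_measure[OF
        prob_space_Prob[OF kernel_Prob]]] .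
  show "(\<lambda>x. emeasure (kernel x) UNIV) \<in> borel_measurable borel"
    using prob_space.prob_space[OF prob_space_Prob[OF kernel_Prob]] space_Prob[OF kernel_Prob]
    by (simp add: emeasure_eq)
  fix A :: "'x set" assume "A \<in> Collect closed"
  then have A: "closed A" by simp
  show "(\<lambda>x. emeasure (kernel x) A) \<in> borel_measurable borel"
  proof (cases "A = {}")
    case False
    have "(\<lambda>m. B (cutoff A m) x) \<longlonglongrightarrow> measure (kernel x) A" for x
      using integral_cutoff_tendsto[OF kernel_Prob A False, of x]
        integral_kernel[OF lipschitz_imp_continuous[OF lipschitz_cutoff]] by simp
    then have "(\<lambda>x. measure (kernel x) A) \<in> borel_measurable borel"
      by (rule borel_measurable_LIMSEQ_real)
         (intro lipschitz_imp_measurable lipschitz_transfer_op lipschitz_cutoff)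
    then show ?thesis by (simp add: emeasure_eq)
  qed simp
qed

lemma measurable_kernel_Prob: "\<mu> \<in> Prob \<Longrightarrow> kernel \<in> \<mu> \<rightarrow>\<^sub>M subprob_algebra borel"
  using measurable_kernel measurable_cong_sets[OF sets_Prob refl] by blast

lemma bind_kernel_Prob:
  assumes "\<mu> \<in> Prob"
  shows "bind \<mu> kernel \<in> Prob"
proof -
  have "prob_space (bind \<mu> kernel)"
    using prob_space_Prob[OF assms]
    by (intro prob_space.prob_space_bind[OF _ _ measurable_kernel_Prob[OF assms]] AE_I2
        prob_space_Prob[OF kernel_Prob])
  moreover have "sets (bind \<mu> kernel) = sets borel"
    using sets_bind_measurable[OF measurable_kernel_Prob[OF assms]] space_Prob[OF assms] by simp
  ultimately show ?thesis unfolding Prob_def by simp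
qed

lemma integral_bind_kernel:
  assumes "\<mu> \<in> Prob" "continuous_on UNIV f"
  shows "integral\<^sup>L (bind \<mu> kernel) f = integral\<^sup>L \<mu> (B f)"
proof -
  interpret prob_space \<mu> by (rule prob_space_Prob[OF assms(1)])
  obtain C where C: "\<And>x. \<bar>f x\<bar> \<le> C"
    using continuous_on_compact_UNIV_bounded[OF compact_X assms(2)] by blast
  have "integral\<^sup>L (bind \<mu> kernel) f = integral\<^sup>L \<mu> (\<lambda>x. integral\<^sup>L (kernel x) f)"
    by (rule integral_bind[OF _ _ measurable_kernel_Prob[OF assms(1)], where B=C])
       (auto simp: borel_measurable_continuous_onI[OF assms(2)] C
         prob_space.emeasure_space_1[OF prob_space_Prob[OF kernel_Prob]])
  then show ?thesis using integral_kernel[OF assms(2)] by simp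
qed

lemma markov_op_eq_bind:
  assumes "\<mu> \<in> Prob"
  shows "T \<mu> = bind \<mu> kernel"
  unfolding markov_op_def
proof (rule the_equality)
  fix \<nu> assume \<nu>: "\<nu> \<in> Prob \<and>
    (\<forall>f. continuous_on UNIV f \<longrightarrow> integral\<^sup>L \<nu> f = integral\<^sup>L \<mu> (transfer_op q \<tau> f))"
  show "\<nu> = bind \<mu> kernel"
  proof (rule Prob_eqI_lipschitz[OF _ bind_kernel_Prob[OF assms]])
    show "\<nu> \<in> Prob" using \<nu> by blast
    fix f :: "'x \<Rightarrow> real" assume "lipschitz f"
    then have "continuous_on UNIV f" by (rule lipschitz_imp_continuous)
    then show "integral\<^sup>L \<nu> f = integral\<^sup>L (bind \<mu> kernel) f"
      using \<nu> integral_bind_kernel[OF assms] by simp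
  qed
qed (use bind_kernel_Prob[OF assms] integral_bind_kernel[OF assms] in auto)

lemma markov_op_Prob: "\<mu> \<in> Prob \<Longrightarrow> T \<mu> \<in> Prob"
  by (simp add: markov_op_eq_bind bind_kernel_Prob)

lemma integral_markov_op:
  "\<mu> \<in> Prob \<Longrightarrow> continuous_on UNIV f \<Longrightarrow> integral\<^sup>L (T \<mu>) f = integral\<^sup>L \<mu> (B f)"
  by (simp add: markov_op_eq_bind integral_bind_kernel)

lemma emeasure_markov_op:
  assumes "\<mu> \<in> Prob" "A \<in> sets borel"
  shows "emeasure (T \<mu>) A = (\<integral>\<^sup>+ x. emeasure (kernel x) A \<partial>\<mu>)"
  unfolding markov_op_eq_bind[OF assms(1)]
  using emeasure_bind[OF _ measurable_kernel_Prob[OF assms(1)] assms(2)] space_Prob[OF assms(1)]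
  by simp

lemma markov_op_iter_Prob: "\<mu> \<in> Prob \<Longrightarrow> (T ^^ n) \<mu> \<in> Prob"
  by (induction n) (auto intro: markov_op_Prob)

lemma integral_markov_op_iter:
  "\<mu> \<in> Prob \<Longrightarrow> lipschitz f \<Longrightarrow> integral\<^sup>L ((T ^^ n) \<mu>) f = integral\<^sup>L \<mu> ((B ^^ n) f)"
proof (induction n arbitrary: f)
  case (Suc n)
  have "integral\<^sup>L ((T ^^ Suc n) \<mu>) f = integral\<^sup>L ((T ^^ n) \<mu>) (B f)"
    using Suc.prems by (simp add: integral_markov_op markov_op_iter_Prob lipschitz_imp_continuous)
  also have "\<dots> = integral\<^sup>L \<mu> ((B ^^ n) (B f))"
    using Suc by (simp add: lipschitz_transfer_op)
  finally show ?case by (simp add: funpow_swap1)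
qed simp

subsection \<open>Lipschitz constants of the iterates of the transfer operator\<close>

definition word_lip :: "nat \<Rightarrow> real" where
  "word_lip j = s ^ (j div M)"

definition transfer_lip :: "nat \<Rightarrow> real" where
  "transfer_lip = renewal_seq (r * t) word_lip"

lemma word_lip_nonneg: "word_lip j \<ge> 0"
  unfolding word_lip_def using s_pos by simp

lemma transfer_lip_nonneg: "transfer_lip n \<ge> 0"
  unfolding transfer_lip_def using r_nonneg t_nonneg word_lip_nonneg by (simp add: renewal_seq_nonneg)

lemma transfer_lip_eq:
  "transfer_lip n = word_lip n + r * t * (\<Sum>i<n. word_lip i * transfer_lip (n - 1 - i))"
  unfolding transfer_lip_def by (subst renewal_seq.simps) simp

lemma dist_tau_seq_le: "dist (tau_seq \<tau> w x) (tau_seq \<tau> w y) \<le> word_lip (length w) * dist x y"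
proof (induction "length w" arbitrary: w x y rule: less_induct)
  case less
  show ?case
  proof (cases "length w < M")
    case True
    have "dist (tau_seq \<tau> w x) (tau_seq \<tau> w y) \<le> dist x y"
      using lipschitz_onD[OF tau_1_lipschitz]
      by (induction w arbitrary: x y) (simp_all, meson order_trans)
    then show ?thesis using True unfolding word_lip_def by simp
  next
    case False
    define w1 where "w1 = take M w"
    define w2 where "w2 = drop M w"
    have w: "tau_seq \<tau> w z = tau_seq \<tau> w2 (tau_seq \<tau> w1 z)" for z
      using tau_seq_append[of \<tau> w1 w2] unfolding w1_def w2_def by simp
    have w1: "length w1 = M" and w2: "length w2 < length w"
      using False M_pos unfolding w1_def w2_def by simp_all
    have "dist (tau_seq \<tau> w x) (tau_seq \<tau> w y)
        \<le> word_lip (length w2) * dist (tau_seq \<tau> w1 x) (tau_seq \<tau> w1 y)"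
      unfolding w by (rule less(1)[OF w2])
    also have "\<dots> \<le> word_lip (length w2) * (s * dist x y)"
      using lipschitz_onD[OF tau_seq_contraction[OF w1]] word_lip_nonneg by (intro mult_left_mono) auto
    also have "word_lip (length w2) * (s * dist x y) = word_lip (length w) * dist x y"
      using False M_pos le_div_geq[of M "length w"]
      by (simp add: w2_def word_lip_def)
    finally show ?thesis .
  qed
qed

lemma sum_word_lip_le: "(\<Sum>i<N. word_lip i) \<le> real M / (1 - s)"
proof -
  have blocks: "(\<Sum>i<M * K. word_lip i) = real M * (\<Sum>k<K. s ^ k)" for K
  proof (induction K)
    case (Suc K)
    have "(\<Sum>i<m + k. word_lip i) = (\<Sum>i<m. word_lip i) + (\<Sum>i<k. word_lip (m + i))" for m k
      by (induction k) (simp_all add: add.assoc)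
    from this[of "M * K" M]
    have "(\<Sum>i<M * Suc K. word_lip i) = (\<Sum>i<M * K. word_lip i) + (\<Sum>i<M. word_lip (M * K + i))"
      by (simp add: add.commute)
    also have "(\<Sum>i<M. word_lip (M * K + i)) = real M * s ^ K"
      using M_pos by (simp add: word_lip_def)
    finally show ?case using Suc by (simp add: algebra_simps)
  qed simp
  have "(\<Sum>i<N. word_lip i) \<le> (\<Sum>i<M * N. word_lip i)"
    by (rule sum_mono2) (use M_pos word_lip_nonneg in auto)
  also have "\<dots> = real M * ((1 - s ^ N) / (1 - s))"
    using s_less_1 by (simp add: blocks sum_gp_strict)
  also have "\<dots> \<le> real M * (1 / (1 - s))"
    using s_pos s_less_1 by (intro mult_left_mono divide_right_mono) auto
  finally show ?thesis by simp
qed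

lemma transfer_lip_tendsto_0: "transfer_lip \<longlonglongrightarrow> 0"
  unfolding transfer_lip_def
proof (rule renewal_seq_tendsto_0[OF _ word_lip_nonneg sum_word_lip_le])
  show "0 \<le> r * t" using r_nonneg t_nonneg by simp
  show "r * t * (real M / (1 - s)) < 1" using small s_less_1 by (simp add: field_simps)
qed

text \<open>Peeling off one application of \<open>B\<close>
  at a time, the \<open>i\<close>-th step contributes the change \<open>r t\<close> of the probabilities, seen through the
  contraction \<open>word_lip (j + i)\<close> of the words leading there and the Lipschitz constant of the
  remaining \<open>n - 1 - i\<close> iterates; for \<open>j = 0\<close> this is the recurrence defining \<open>transfer_lip\<close>.\<close>

lemma transfer_op_iter_diff_le:
  assumes f: "L-lipschitz_on UNIV f"
  shows "length w = j \<Longrightarrow> (B ^^ n) f (tau_seq \<tau> w x) - (B ^^ n) f (tau_seq \<tau> w y)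
      \<le> L * (word_lip (j + n) + r * t * (\<Sum>i<n. word_lip (j + i) * transfer_lip (n - 1 - i))) * dist x y"
proof (induction n arbitrary: j w x y)
  case 0
  have L: "L \<ge> 0" using f lipschitz_on_nonneg by blast
  have "f (tau_seq \<tau> w x) - f (tau_seq \<tau> w y) \<le> L * dist (tau_seq \<tau> w x) (tau_seq \<tau> w y)"
    using lipschitz_onD[OF f] by (simp add: dist_real_def abs_le_iff)
  also have "\<dots> \<le> L * (word_lip j * dist x y)"
    using dist_tau_seq_le 0 L by (intro mult_left_mono) auto
  finally show ?case by (simp add: mult.assoc)
next
  case (Suc n)
  have L: "L \<ge> 0" using f lipschitz_on_nonneg by blast
  define h where "h = (B ^^ n) f"
  have "h x - h y \<le> L * transfer_lip n * dist x y" for x y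
    using Suc.IH[of "[]" 0 x y] transfer_lip_eq[of n] unfolding h_def by simp
  then have h: "(L * transfer_lip n)-lipschitz_on UNIV h"
    using L transfer_lip_nonneg by (intro lipschitz_on_of_diff_le) auto
  define c where "c = L * (word_lip (Suc j + n) +
    r * t * (\<Sum>i<n. word_lip (Suc j + i) * transfer_lip (n - 1 - i))) * dist x y"
  have "h (\<tau> l (tau_seq \<tau> w x)) - h (\<tau> l (tau_seq \<tau> w y)) \<le> c" for l
    using Suc.IH[of "w @ [l]" "Suc j" x y] Suc.prems unfolding h_def c_def by (simp add: tau_seq_snoc)
  from transfer_op_diff_le[OF h this]
  have "B h (tau_seq \<tau> w x) - B h (tau_seq \<tau> w y)
      \<le> c + L * transfer_lip n * r * t * dist (tau_seq \<tau> w x) (tau_seq \<tau> w y)" .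
  also have "\<dots> \<le> c + L * transfer_lip n * r * t * (word_lip j * dist x y)"
    using dist_tau_seq_le[of w x y] Suc.prems L transfer_lip_nonneg[of n] r_nonneg t_nonneg
    by (intro add_left_mono mult_left_mono) auto
  also have "\<dots> = L * (word_lip (j + Suc n) +
      r * t * (\<Sum>i<Suc n. word_lip (j + i) * transfer_lip (Suc n - 1 - i))) * dist x y"
    unfolding c_def sum.lessThan_Suc_shift by (simp add: algebra_simps)
  finally show ?case unfolding h_def by simp
qed

lemma lipschitz_on_transfer_op_iter:
  assumes "L-lipschitz_on UNIV f"
  shows "(L * transfer_lip n)-lipschitz_on UNIV ((B ^^ n) f)"
  using transfer_op_iter_diff_le[OF assms, of "[]" 0 n] transfer_lip_eq[of n]
    lipschitz_on_nonneg[OF assms] transfer_lip_nonneg[of n]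
  by (intro lipschitz_on_of_diff_le) auto

lemma dMK_markov_op_iter_le:
  assumes "\<mu> \<in> Prob" "\<nu> \<in> Prob"
  shows "dMK ((T ^^ n) \<mu>) ((T ^^ n) \<nu>) \<le> transfer_lip n * dMK \<mu> \<nu>"
proof (rule dMK_leI)
  fix f :: "'x \<Rightarrow> real" assume f: "1-lipschitz_on UNIV f"
  then show "integral\<^sup>L ((T ^^ n) \<mu>) f - integral\<^sup>L ((T ^^ n) \<nu>) f \<le> transfer_lip n * dMK \<mu> \<nu>"
    using integral_diff_le_lipschitz_dMK[OF compact_X assms lipschitz_on_transfer_op_iter[OF f, of n]]
    by (simp add: integral_markov_op_iter[OF _ lipschitzI[OF f]] assms)
qed

subsection \<open>The attractor\<close>

lemma fractal_op_mono: "A \<subseteq> A' \<Longrightarrow> F A \<subseteq> F A'"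
  unfolding fractal_op_def by auto

lemma fractal_op_iter_mono: "A \<subseteq> A' \<Longrightarrow> (F ^^ n) A \<subseteq> (F ^^ n) A'"
  by (induction n) (simp_all add: fractal_op_mono)

lemma fractal_op_eq_image: "F A = (\<lambda>p. \<tau> (fst p) (snd p)) ` (UNIV \<times> A)"
  unfolding fractal_op_def by force

lemma compact_fractal_op_iter: "compact A \<Longrightarrow> compact ((F ^^ n) A)"
proof (induction n)
  case (Suc n)
  then show ?case
    unfolding funpow.simps comp_def fractal_op_eq_image
    by (intro compact_continuous_image[OF continuous_on_subset[OF tau_cont subset_UNIV]]
        compact_Times[OF compact_L])
qed simp

lemma fractal_op_iter_eq: "(F ^^ n) A = {tau_seq \<tau> w a | w a. length w = n \<and> a \<in> A}"
proof (induction n)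
  case (Suc n)
  have "y \<in> F ((F ^^ n) A) \<longleftrightarrow> (\<exists>w a. y = tau_seq \<tau> w a \<and> length w = Suc n \<and> a \<in> A)" for y
  proof
    assume "y \<in> F ((F ^^ n) A)"
    then obtain l w a where "y = \<tau> l (tau_seq \<tau> w a)" "length w = n" "a \<in> A"
      unfolding Suc fractal_op_def by blast
    then show "\<exists>w a. y = tau_seq \<tau> w a \<and> length w = Suc n \<and> a \<in> A"
      by (intro exI[of _ "w @ [l]"] exI[of _ a]) (simp add: tau_seq_snoc)
  next
    assume "\<exists>w a. y = tau_seq \<tau> w a \<and> length w = Suc n \<and> a \<in> A"
    then obtain w l a where "y = tau_seq \<tau> (w @ [l]) a" "length w = n" "a \<in> A"
      by (metis length_Suc_conv_rev)
    then show "y \<in> F ((F ^^ n) A)"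
      unfolding Suc fractal_op_def by (auto simp: tau_seq_snoc)
  qed
  then show ?case by auto
qed simp

lemma fractal_op_iter_nonempty: "A \<noteq> {} \<Longrightarrow> (F ^^ k) A \<noteq> {}"
  by (induction k) (auto simp: fractal_op_def)

lemma hausdorff_dist_fractal_op_iter_le:
  assumes "A \<noteq> {}" "A' \<noteq> {}"
  shows "hausdorff_dist ((F ^^ n) A) ((F ^^ n) A') \<le> word_lip n * hausdorff_dist A A'"
proof -
  have bounded: "bounded S" for S :: "'x set"
    using bounded_subset[OF compact_imp_bounded[OF compact_X]] by blast
  have W: "{w::'l list. length w = n} \<noteq> {}"
    using length_replicate[of n undefined] by blast
  have "hausdorff_dist {tau_seq \<tau> w a | w a. w \<in> {w. length w = n} \<and> a \<in> A}
      {tau_seq \<tau> w b | w b. w \<in> {w. length w = n} \<and> b \<in> A'} \<le> word_lip n * hausdorff_dist A A'"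
    by (rule hausdorff_dist_images_le[OF assms(1) bounded assms(2) bounded W word_lip_nonneg])
       (use dist_tau_seq_le in fastforce)
  then show ?thesis unfolding fractal_op_iter_eq by simp
qed

definition attractor :: "'x set" where
  "attractor = (\<Inter>k. (F ^^ k) UNIV)"

lemma fractal_op_iter_UNIV_antimono: "m \<le> n \<Longrightarrow> (F ^^ n) UNIV \<subseteq> (F ^^ m) UNIV"
proof (induction n rule: dec_induct)
  case (step n)
  have "(F ^^ Suc n) UNIV = (F ^^ n) (F UNIV)" by (simp add: funpow_swap1)
  also have "\<dots> \<subseteq> (F ^^ n) UNIV" by (rule fractal_op_iter_mono) simp
  finally show ?case using step by simp
qed simp

lemma closed_fractal_op_iter_UNIV: "closed ((F ^^ k) UNIV)"
  by (rule compact_imp_closed[OF compact_fractal_op_iter[OF compact_X]])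

lemma attractor_nonempty: "attractor \<noteq> {}"
  unfolding attractor_def
  by (rule compact_UNIV_nest[OF compact_X closed_fractal_op_iter_UNIV
        fractal_op_iter_nonempty[OF UNIV_not_empty]])
     (simp add: decseq_def fractal_op_iter_UNIV_antimono)

lemma compact_attractor: "compact attractor"
proof -
  have "closed attractor"
    unfolding attractor_def by (intro closed_INT ballI closed_fractal_op_iter_UNIV)
  then show ?thesis using compact_Int_closed[OF compact_X] by simp
qed

text \<open>A point of the attractor has preimages \<open>(l, x)\<close> with \<open>x\<close> in every \<open>F^k(X)\<close>; by compactness of
  \<open>\<Lambda> \<times> X\<close> a common one exists.\<close>

lemma fractal_op_attractor: "F attractor = attractor"
proof
  have "F attractor \<subseteq> F ((F ^^ k) UNIV)" for k
    unfolding attractor_def by (rule fractal_op_mono) blast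
  then have "F attractor \<subseteq> (F ^^ Suc k) UNIV" for k
    by simp
  moreover have "F attractor \<subseteq> (F ^^ 0) UNIV" by simp
  ultimately show "F attractor \<subseteq> attractor"
    unfolding attractor_def by (metis INT_greatest not0_implies_Suc)
  show "attractor \<subseteq> F attractor"
  proof
    fix y assume y: "y \<in> attractor"
    define E where "E k = (UNIV \<times> (F ^^ k) UNIV) \<inter> (\<lambda>p. \<tau> (fst p) (snd p)) -` {y}" for k
    have "closed (E k)" for k
      unfolding E_def
      by (intro closed_Int closed_Times closed_fractal_op_iter_UNIV closed_vimage[OF closed_singleton tau_cont])
         simp
    moreover have "E k \<noteq> {}" for k
    proof -
      have "y \<in> F ((F ^^ k) UNIV)" using y unfolding attractor_def by (metis INT_E UNIV_I funpow.simps(2) o_apply)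
      then obtain l x where "x \<in> (F ^^ k) UNIV" "y = \<tau> l x" unfolding fractal_op_def by blast
      then have "(l, x) \<in> E k" unfolding E_def by simp
      then show ?thesis by blast
    qed
    moreover have "decseq E"
      unfolding decseq_def E_def using fractal_op_iter_UNIV_antimono by blast
    moreover have "compact (UNIV :: ('l \<times> 'x) set)"
      using compact_Times[OF compact_L compact_X] by simp
    ultimately obtain p where p: "\<And>k. p \<in> E k"
      using compact_UNIV_nest[of E] by blast
    then have "snd p \<in> (F ^^ k) UNIV" "\<tau> (fst p) (snd p) = y" for k
      unfolding E_def by (auto simp: mem_Times_iff)
    then have "snd p \<in> attractor" "\<tau> (fst p) (snd p) = y"
      unfolding attractor_def by auto
    then show "y \<in> F attractor" unfolding fractal_op_def by blast
  qed
qed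

lemma hausdorff_dist_fractal_op_iter_tendsto:
  assumes "A \<noteq> {}"
  shows "(\<lambda>k. hausdorff_dist ((F ^^ k) A) attractor) \<longlonglongrightarrow> 0"
proof (rule real_tendsto_sandwich[where f="\<lambda>_. 0" and h="\<lambda>k. word_lip k * hausdorff_dist A attractor"])
  have bounded: "bounded S" for S :: "'x set"
    using bounded_subset[OF compact_imp_bounded[OF compact_X]] by blast
  show "\<forall>\<^sub>F k in sequentially. 0 \<le> hausdorff_dist ((F ^^ k) A) attractor"
    using hausdorff_dist_nonneg[OF bounded fractal_op_iter_nonempty[OF assms]] by simp
  have "(F ^^ k) attractor = attractor" for k
    by (induction k) (simp_all add: fractal_op_attractor)
  then show "\<forall>\<^sub>F k in sequentially. hausdorff_dist ((F ^^ k) A) attractor \<le> word_lip k * hausdorff_dist A attractor"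
    using hausdorff_dist_fractal_op_iter_le[OF assms attractor_nonempty] by simp
  have "word_lip \<longlonglongrightarrow> 0"
    by (rule summable_LIMSEQ_zero[OF summableI_nonneg_bounded[OF word_lip_nonneg sum_word_lip_le]])
  then show "(\<lambda>k. word_lip k * hausdorff_dist A attractor) \<longlonglongrightarrow> 0"
    by (simp add: tendsto_mult_left_zero)
qed simp

lemma attractor_unique:
  assumes "A \<noteq> {}" "compact A" "F A = A"
  shows "A = attractor"
proof -
  have "(F ^^ n) A = A" "(F ^^ n) attractor = attractor" for n
    by (induction n) (simp_all add: assms(3) fractal_op_attractor)
  then have "hausdorff_dist A attractor \<le> s * hausdorff_dist A attractor"
    using hausdorff_dist_fractal_op_iter_le[OF assms(1) attractor_nonempty, of M] M_pos
    by (simp add: word_lip_def)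
  then have "hausdorff_dist A attractor \<le> 0"
    using s_less_1 hausdorff_dist_nonneg[OF compact_imp_bounded[OF assms(2)] assms(1)]
    by (simp add: mult_le_cancel_right1)
  then have "A \<subseteq> attractor" "attractor \<subseteq> A"
    using hausdorff_dist_le_0_imp_subset[OF compact_imp_bounded[OF assms(2)]
        compact_imp_closed[OF compact_attractor] attractor_nonempty]
      hausdorff_dist_le_0_imp_subset[OF compact_imp_bounded[OF compact_attractor]
        compact_imp_closed[OF assms(2)] assms(1)]
    by (simp_all add: hausdorff_dist_commute)
  then show ?thesis by blast
qed

subsection \<open>The invariant measure\<close>

text \<open>Starting from a point of the attractor keeps all orbit measures concentrated on it.\<close>

definition orbit :: "nat \<Rightarrow> 'x measure" where
  "orbit n = (T ^^ n) (return borel (SOME a. a \<in> attractor))"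

lemma return_Prob: "return borel a \<in> Prob"
  unfolding Prob_def by (simp add: prob_space_return)

lemma orbit_Prob: "orbit n \<in> Prob"
  unfolding orbit_def by (rule markov_op_iter_Prob[OF return_Prob])

text \<open>The difference of the integrals of \<open>f\<close> against \<open>orbit (n + k)\<close> and \<open>orbit n\<close> is that of
  \<open>B^n f\<close> against \<open>orbit k\<close> and the initial Dirac measure, hence at most the oscillation
  \<open>2 L diam(X) transfer_lip n\<close> of \<open>B^n f\<close>.\<close>

lemma convergent_integral_orbit:
  assumes "lipschitz f"
  shows "convergent (\<lambda>n. integral\<^sup>L (orbit n) f)"
proof -
  obtain L where L: "L \<ge> 0" "L-lipschitz_on UNIV f" using assms by (rule lipschitzE)
  define D where "D = 2 * L * diameter (UNIV::'x set)"
  have D: "D \<ge> 0" unfolding D_def using L(1) by (simp add: diameter_ge_0 compact_imp_bounded[OF compact_X])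
  have "\<bar>integral\<^sup>L (orbit (n + k)) f - integral\<^sup>L (orbit n) f\<bar> \<le> transfer_lip n * D" for n k
  proof -
    let ?\<delta> = "return borel (SOME a. a \<in> attractor)"
    have "orbit (n + k) = (T ^^ n) (orbit k)" unfolding orbit_def by (simp add: funpow_add)
    then have "integral\<^sup>L (orbit (n + k)) f - integral\<^sup>L (orbit n) f =
        integral\<^sup>L (orbit k) ((B ^^ n) f) - integral\<^sup>L ?\<delta> ((B ^^ n) f)"
      using integral_markov_op_iter[OF orbit_Prob assms] integral_markov_op_iter[OF return_Prob assms]
      unfolding orbit_def by simp
    moreover have diff_le: "integral\<^sup>L \<mu> ((B ^^ n) f) - integral\<^sup>L \<nu> ((B ^^ n) f) \<le> transfer_lip n * D"
      if "\<mu> \<in> Prob" "\<nu> \<in> Prob" for \<mu> \<nu>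
      using integral_diff_le_diameter[OF compact_X that lipschitz_on_transfer_op_iter[OF L(2)]]
      unfolding D_def by (simp add: algebra_simps)
    ultimately show ?thesis
      using diff_le[OF orbit_Prob[of k] return_Prob[of "SOME a. a \<in> attractor"]]
        diff_le[OF return_Prob[of "SOME a. a \<in> attractor"] orbit_Prob[of k]] by linarith
  qed
  moreover have "(\<lambda>n. transfer_lip n * D) \<longlonglongrightarrow> 0"
    using tendsto_mult_left_zero[OF transfer_lip_tendsto_0] by simp
  ultimately have "Cauchy (\<lambda>n. integral\<^sup>L (orbit n) f)"
    by (rule Cauchy_if_shift_bound)
  then show ?thesis by (simp add: Cauchy_convergent_iff)
qed

definition invariant_measure :: "'x measure" where
  "invariant_measure = (SOME \<mu>. \<mu> \<in> Prob \<and>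
    (\<forall>f. lipschitz f \<longrightarrow> (\<lambda>n. integral\<^sup>L (orbit n) f) \<longlonglongrightarrow> integral\<^sup>L \<mu> f))"

lemma invariant_measure_Prob: "invariant_measure \<in> Prob"
  and integral_orbit_tendsto:
    "lipschitz f \<Longrightarrow> (\<lambda>n. integral\<^sup>L (orbit n) f) \<longlonglongrightarrow> integral\<^sup>L invariant_measure f"
proof -
  obtain \<mu> where "\<mu> \<in> Prob" "\<And>f. lipschitz f \<Longrightarrow> (\<lambda>n. integral\<^sup>L (orbit n) f) \<longlonglongrightarrow> integral\<^sup>L \<mu> f"
    using lipschitz_convergent_limit[OF compact_X orbit_Prob convergent_integral_orbit] by blast
  then have "\<mu> \<in> Prob \<and> (\<forall>f. lipschitz f \<longrightarrow> (\<lambda>n. integral\<^sup>L (orbit n) f) \<longlonglongrightarrow> integral\<^sup>L \<mu> f)"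
    by blast
  then have "invariant_measure \<in> Prob \<and>
      (\<forall>f. lipschitz f \<longrightarrow> (\<lambda>n. integral\<^sup>L (orbit n) f) \<longlonglongrightarrow> integral\<^sup>L invariant_measure f)"
    unfolding invariant_measure_def by (rule someI)
  then show "invariant_measure \<in> Prob"
    "lipschitz f \<Longrightarrow> (\<lambda>n. integral\<^sup>L (orbit n) f) \<longlonglongrightarrow> integral\<^sup>L invariant_measure f"
    by blast+
qed

lemma markov_op_invariant_measure: "T invariant_measure = invariant_measure"
proof (rule Prob_eqI_lipschitz[OF markov_op_Prob[OF invariant_measure_Prob] invariant_measure_Prob])
  fix f :: "'x \<Rightarrow> real" assume f: "lipschitz f"
  have "integral\<^sup>L (orbit (Suc n)) f = integral\<^sup>L (orbit n) (B f)" for n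
    using integral_markov_op[OF orbit_Prob lipschitz_imp_continuous[OF f]] by (simp add: orbit_def)
  then have "(\<lambda>n. integral\<^sup>L (orbit (Suc n)) f) \<longlonglongrightarrow> integral\<^sup>L invariant_measure (B f)"
    using integral_orbit_tendsto[OF lipschitz_transfer_op[OF f]] by simp
  then have "integral\<^sup>L invariant_measure (B f) = integral\<^sup>L invariant_measure f"
    by (rule LIMSEQ_unique[OF _ LIMSEQ_Suc[OF integral_orbit_tendsto[OF f]]])
  then show "integral\<^sup>L (T invariant_measure) f = integral\<^sup>L invariant_measure f"
    by (simp add: integral_markov_op[OF invariant_measure_Prob lipschitz_imp_continuous[OF f]])
qed

lemma markov_op_iter_invariant_measure: "(T ^^ n) invariant_measure = invariant_measure"
  by (induction n) (simp_all add: markov_op_invariant_measure)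

lemma dMK_markov_op_iter_tendsto:
  assumes "\<nu> \<in> Prob"
  shows "(\<lambda>k. dMK ((T ^^ k) \<nu>) invariant_measure) \<longlonglongrightarrow> 0"
proof (rule real_tendsto_sandwich[where f="\<lambda>_. 0" and h="\<lambda>k. transfer_lip k * dMK \<nu> invariant_measure"])
  show "\<forall>\<^sub>F k in sequentially. 0 \<le> dMK ((T ^^ k) \<nu>) invariant_measure"
    using dMK_nonneg[OF compact_X markov_op_iter_Prob[OF assms] invariant_measure_Prob] by simp
  show "\<forall>\<^sub>F k in sequentially. dMK ((T ^^ k) \<nu>) invariant_measure \<le> transfer_lip k * dMK \<nu> invariant_measure"
    using dMK_markov_op_iter_le[OF assms invariant_measure_Prob] markov_op_iter_invariant_measure
    by simp
  show "(\<lambda>k. transfer_lip k * dMK \<nu> invariant_measure) \<longlonglongrightarrow> 0"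
    using tendsto_mult_left_zero[OF transfer_lip_tendsto_0] by simp
qed simp

lemma invariant_measure_unique:
  assumes "\<mu> \<in> Prob" "T \<mu> = \<mu>"
  shows "\<mu> = invariant_measure"
proof -
  have "(T ^^ k) \<mu> = \<mu>" for k
    by (induction k) (simp_all add: assms(2))
  then have "dMK \<mu> invariant_measure = 0"
    using LIMSEQ_unique[OF dMK_markov_op_iter_tendsto[OF assms(1)]] by simp
  then show ?thesis
    by (intro Prob_eq_if_dMK_le_0[OF compact_X assms(1) invariant_measure_Prob]) simp
qed

subsection \<open>The support of the invariant measure\<close>

lemma sets_attractor: "attractor \<in> sets borel"
  using compact_imp_closed[OF compact_attractor] by simp

lemma emeasure_kernel_attractor:
  assumes "x \<in> attractor"
  shows "emeasure (kernel x) attractor = 1"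
proof -
  have "\<tau> l x \<in> attractor" for l
    using assms fractal_op_attractor unfolding fractal_op_def by blast
  then have "(\<lambda>l. \<tau> l x) -` attractor \<inter> space (q x) = space (q x)" by auto
  then show ?thesis
    using emeasure_kernel[OF sets_attractor] prob_space.emeasure_space_1[OF prob_space_Prob[OF q_Prob]]
    by simp
qed

lemma measure_orbit_attractor: "measure (orbit n) attractor = 1"
proof (induction n)
  case 0
  have "(SOME a. a \<in> attractor) \<in> attractor"
    using attractor_nonempty by (simp add: some_in_eq)
  then have "emeasure (orbit 0) attractor = 1"
    unfolding orbit_def using sets_attractor by (simp add: emeasure_return)
  then show ?case by (simp add: measure_def)
next
  case (Suc n)
  interpret prob_space "orbit n" by (rule prob_space_Prob[OF orbit_Prob])
  have "AE x in orbit n. x \<in> attractor" using Suc by (rule AE_prob_1)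
  then have "AE x in orbit n. emeasure (kernel x) attractor = 1"
    by eventually_elim (rule emeasure_kernel_attractor)
  have "emeasure (orbit (Suc n)) attractor = (\<integral>\<^sup>+ x. emeasure (kernel x) attractor \<partial>orbit n)"
    using emeasure_markov_op[OF orbit_Prob sets_attractor] by (simp add: orbit_def)
  also have "\<dots> = (\<integral>\<^sup>+ x. 1 \<partial>orbit n)"
    by (rule nn_integral_cong_AE) fact
  finally show ?case using emeasure_space_1 by (simp add: measure_def)
qed

lemma supp_invariant_measure_subset: "supp invariant_measure \<subseteq> attractor"
proof
  fix x assume x: "x \<in> supp invariant_measure"
  interpret prob_space invariant_measure by (rule prob_space_Prob[OF invariant_measure_Prob])
  have "measure invariant_measure attractor = 1"
    using measure_closed_eq_1_limit[OF orbit_Prob invariant_measure_Prob integral_orbit_tendsto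
        compact_imp_closed[OF compact_attractor] measure_orbit_attractor] .
  then have "emeasure invariant_measure (- attractor) = 0"
    using prob_compl[of attractor] sets_attractor space_Prob[OF invariant_measure_Prob]
    by (simp add: emeasure_eq_measure sets_Prob[OF invariant_measure_Prob] Compl_eq_Diff_UNIV)
  moreover have "open (- attractor)"
    using compact_imp_closed[OF compact_attractor] by (simp add: open_Compl)
  ultimately show "x \<in> attractor" using x unfolding supp_def by force
qed

lemma emeasure_kernel_pos:
  assumes "open U" "open V" "V \<noteq> {}" "\<And>l. l \<in> V \<Longrightarrow> \<tau> l x \<in> U"
  shows "emeasure (kernel x) U > 0"
proof -
  have U: "U \<in> sets borel" using assms(1) by simp
  have "0 < ennreal (measure (q x) V)" using q_open_pos assms(2,3) by auto
  also have "\<dots> = emeasure (q x) V"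
    using finite_measure.emeasure_eq_measure[OF prob_space.finite_measure[OF
        prob_space_Prob[OF q_Prob]]] by simp
  also have "\<dots> \<le> emeasure (kernel x) U"
    unfolding emeasure_kernel[OF U] using assms(4) space_Prob[OF q_Prob]
    by (intro emeasure_mono measurable_sets[OF measurable_tau_param U]) auto
  finally show ?thesis .
qed

lemma emeasure_markov_op_pos:
  assumes \<mu>: "\<mu> \<in> Prob" and U: "U \<in> sets borel" and W: "W \<in> sets borel" "emeasure \<mu> W > 0"
    and pos: "\<And>x. x \<in> W \<Longrightarrow> emeasure (kernel x) U > 0"
  shows "emeasure (T \<mu>) U > 0"
proof (rule ccontr)
  assume "\<not> emeasure (T \<mu>) U > 0"
  then have "(\<integral>\<^sup>+ x. emeasure (kernel x) U \<partial>\<mu>) = 0"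
    using emeasure_markov_op[OF \<mu> U] by (simp add: not_gr_zero)
  moreover have "(\<lambda>x. emeasure (kernel x) U) \<in> borel_measurable \<mu>"
    using measurable_compose[OF measurable_kernel_Prob[OF \<mu>]
        measurable_emeasure_subprob_algebra[OF U]] .
  ultimately have "AE x in \<mu>. emeasure (kernel x) U = 0"
    using nn_integral_0_iff_AE by blast
  then have "AE x in \<mu>. x \<notin> W"
    by eventually_elim (use pos in force)
  then have "W \<in> null_sets \<mu>"
    using AE_iff_null_sets W(1) sets_Prob[OF \<mu>] by blast
  then show False using W(2) by auto
qed

text \<open>The support is invariant: by (H4) each \<open>q x\<close> charges every nonempty open set of
  parameters, so the image of the support under any \<open>\<tau> l\<close> is again charged.\<close>

lemma fractal_op_supp_subset: "F (supp invariant_measure) \<subseteq> supp invariant_measure"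
proof
  fix y assume "y \<in> F (supp invariant_measure)"
  then obtain l0 x0 where x0: "x0 \<in> supp invariant_measure" and y: "y = \<tau> l0 x0"
    unfolding fractal_op_def by blast
  show "y \<in> supp invariant_measure" unfolding supp_def
  proof (intro CollectI allI impI)
    fix U assume U: "open U \<and> y \<in> U"
    then have "open ((\<lambda>p. \<tau> (fst p) (snd p)) -` U)" "(l0, x0) \<in> (\<lambda>p. \<tau> (fst p) (snd p)) -` U"
      using y by (auto intro: open_vimage tau_cont)
    then obtain V W where VW: "open V" "open W" "(l0, x0) \<in> V \<times> W"
      "V \<times> W \<subseteq> (\<lambda>p. \<tau> (fst p) (snd p)) -` U"
      by (rule open_prod_elim)
    have "emeasure invariant_measure W > 0"
      using x0 VW(2,3) unfolding supp_def by blast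
    moreover have "emeasure (kernel x) U > 0" if "x \<in> W" for x
      using VW that U by (intro emeasure_kernel_pos[of U V]) auto
    ultimately have "emeasure (T invariant_measure) U > 0"
      using VW(2) U by (intro emeasure_markov_op_pos[OF invariant_measure_Prob]) auto
    then show "emeasure invariant_measure U > 0"
      by (simp add: markov_op_invariant_measure)
  qed
qed

text \<open>The support is closed, nonempty and mapped into itself by \<open>F\<close>, so the contraction of \<open>F\<close>
  towards the attractor leaves it containing the attractor.\<close>

lemma attractor_subset_supp: "attractor \<subseteq> supp invariant_measure"
proof
  fix a assume a: "a \<in> attractor"
  define S where "S = supp invariant_measure"
  have S: "closed S" "S \<noteq> {}" "bounded S"
    unfolding S_def using closed_supp supp_nonempty[OF compact_X invariant_measure_Prob]
      bounded_subset[OF compact_imp_bounded[OF compact_X]] by auto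
  have FS: "(F ^^ k) S \<subseteq> S" for k
  proof (induction k)
    case (Suc k)
    then have "F ((F ^^ k) S) \<subseteq> F S" by (rule fractal_op_mono)
    then show ?case using fractal_op_supp_subset unfolding S_def by simp
  qed simp
  have "infdist a S \<le> hausdorff_dist ((F ^^ k) S) attractor" for k
  proof -
    have "infdist a S \<le> infdist a ((F ^^ k) S)"
      by (rule infdist_mono[OF FS fractal_op_iter_nonempty[OF S(2)]])
    also have "\<dots> \<le> hausdorff_dist attractor ((F ^^ k) S)"
      by (rule infdist_le_hausdorff_dist[OF compact_imp_bounded[OF compact_attractor] a])
    also have "\<dots> = hausdorff_dist ((F ^^ k) S) attractor"
      by (rule hausdorff_dist_commute)
    finally show ?thesis .
  qed
  then have "infdist a S \<le> 0"
    by (intro LIMSEQ_le_const[OF hausdorff_dist_fractal_op_iter_tendsto[OF S(2)]]) auto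
  then show "a \<in> supp invariant_measure"
    using in_closed_iff_infdist_zero[OF S(1,2)] infdist_nonneg[of a S] unfolding S_def by simp
qed

lemma supp_invariant_measure: "supp invariant_measure = attractor"
  using supp_invariant_measure_subset attractor_subset_supp by blast

end

theorem mainTheorem1:
  fixes \<tau> :: "'l::metric_space \<Rightarrow> 'x::metric_space \<Rightarrow> 'x"
    and q :: "'x \<Rightarrow> 'l measure"
    and M :: nat and s r t :: real
  assumes cX: "compact (UNIV :: 'x set)"
    and cL: "compact (UNIV :: 'l set)"
    and tau_cont: "continuous_on UNIV (\<lambda>p :: 'l \<times> 'x. \<tau> (fst p) (snd p))"
    and q_prob: "\<And>x. q x \<in> Prob"
    and q_cont: "\<And>x e. e > 0 \<Longrightarrow> \<exists>\<delta>>0. \<forall>y. dist x y < \<delta> \<longrightarrow> dMK (q x) (q y) < e"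
    and W1: "\<And>l. 1-lipschitz_on UNIV (\<tau> l)"
    and CP1: "M \<ge> 1" "0 < s" "s < 1"
      "\<And>ls. length ls = M \<Longrightarrow> s-lipschitz_on UNIV (tau_seq \<tau> ls)"
    and H2: "r \<ge> 0" "\<And>l1 l2 x. dist (\<tau> l1 x) (\<tau> l2 x) \<le> r * dist l1 l2"
    and H3: "t \<ge> 0" "\<And>x y. dMK (q x) (q y) \<le> t * dist x y"
    and H4: "\<And>A x. open A \<Longrightarrow> A \<noteq> {} \<Longrightarrow> measure (q x) A > 0"
    and small: "s + r * real M * t < 1"
  shows "\<exists>A. A \<noteq> {} \<and> compact A \<and> fractal_op \<tau> A = A
           \<and> (\<forall>A'. A' \<noteq> {} \<and> compact A' \<and> fractal_op \<tau> A' = A' \<longrightarrow> A' = A)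
           \<and> (\<forall>B. B \<noteq> {} \<and> compact B \<longrightarrow>
                 (\<lambda>k. hausdorff_dist ((fractal_op \<tau> ^^ k) B) A) \<longlonglongrightarrow> 0)
           \<and> (\<exists>\<mu>\<in>Prob. markov_op q \<tau> \<mu> = \<mu>
                 \<and> (\<forall>\<mu>'\<in>Prob. markov_op q \<tau> \<mu>' = \<mu>' \<longrightarrow> \<mu>' = \<mu>)
                 \<and> (\<forall>\<nu>\<in>Prob. (\<lambda>k. dMK ((markov_op q \<tau> ^^ k) \<nu>) \<mu>) \<longlonglongrightarrow> 0)
                 \<and> supp \<mu> = A)"
proof -
  interpret place_dependent_ifs \<tau> q M s r t
    using cX cL tau_cont q_prob W1 CP1 H2 H3 H4 small by unfold_locales
  show ?thesis
  proof (intro exI[of _ attractor] bexI[of _ invariant_measure] conjI allI impI ballI)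
    show "A = attractor" if "A \<noteq> {} \<and> compact A \<and> F A = A" for A
      using attractor_unique that by blast
    show "(\<lambda>k. hausdorff_dist ((F ^^ k) A) attractor) \<longlonglongrightarrow> 0" if "A \<noteq> {} \<and> compact A" for A
      using hausdorff_dist_fractal_op_iter_tendsto that by blast
    show "\<mu> = invariant_measure" if "\<mu> \<in> Prob" "T \<mu> = \<mu>" for \<mu>
      using invariant_measure_unique that .
  qed (simp_all add: attractor_nonempty compact_attractor fractal_op_attractor invariant_measure_Prob
      markov_op_invariant_measure dMK_markov_op_iter_tendsto supp_invariant_measure)
qed

end
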